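(* Let $E$ be a real Banach space. For every $f\in H_0[E]_+$ there is a regular Borel probability measure $\mu$ on $(B_{E^{**}},w^* )$ such that $f(x^* )\le\|f\|_{FBL[E]}\,f_\mu(x^* )$ for all $x^*\in E^*$, where $f_\mu(x^* )=\int_{B_{E^{**}}}|x^*(\cdot)|\,d\mu$ (with $x^*(x^{**}):=x^{**}(x^* )$).
   Context: For a real Banach space $E$ with dual $E^*$ and closed unit ball $B_E$, let $H[E]$ be the vector space of all positively homogeneous functions $f:E^*\to\mathbb R$ ($f(\lambda x^* )=\lambda f(x^* )$ for $\lambda>0$). For $f\in H[E]$ put $\|f\|_{FBL[E]}:=\sup\{\sum_{k=1}^n|f(x_k^* )| : n\in\mathbb N,\ x_1^*,\dots,x_n^*\in E^*,\ \sup_{x\in B_E}\sum_{k=1}^n|x_k^*(x)|\le 1\}$. $H_0[E]:=\{f\in H[E]:\|f\|_{FBL[E]}<\infty\}$, a Banach lattice with this norm and pointwise order; $H_0[E]_+$ is its positive cone. *)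

theory Defs
  imports "HOL-Analysis.Analysis" "HOL-Probability.Probability"
begin

text \<open>The closed unit ball of the bidual with the weak-star topology, i.e. the
  initial topology of the evaluations at elements of the dual.\<close>
definition weak_star_bidual_ball :: "(('a::real_normed_vector \<Rightarrow>\<^sub>L real) \<Rightarrow>\<^sub>L real) topology" where
  "weak_star_bidual_ball =
     pullback_topology (cball 0 1) blinfun_apply (product_topology (\<lambda>_. euclideanreal) UNIV)"

definition borel_of :: "'a topology \<Rightarrow> 'a measure" where
  "borel_of T = sigma (topspace T) {U. openin T U}"

definition regular_measure_on :: "'a topology \<Rightarrow> 'a measure \<Rightarrow> bool" where
  "regular_measure_on T \<mu> \<longleftrightarrow>
     (\<forall>A\<in>sets \<mu>.
        emeasure \<mu> A = (SUP K\<in>{K. compactin T K \<and> K \<subseteq> A}. emeasure \<mu> K) \<and>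
        emeasure \<mu> A = (INF U\<in>{U. openin T U \<and> A \<subseteq> U}. emeasure \<mu> U))"

definition pos_homogeneous :: "(('a::real_normed_vector \<Rightarrow>\<^sub>L real) \<Rightarrow> real) \<Rightarrow> bool" where
  "pos_homogeneous f \<longleftrightarrow> (\<forall>x c. c > 0 \<longrightarrow> f (c *\<^sub>R x) = c * f x)"

definition fbl_admissible :: "('a::real_normed_vector \<Rightarrow>\<^sub>L real) list \<Rightarrow> bool" where
  "fbl_admissible xs \<longleftrightarrow> (\<forall>x::'a. norm x \<le> 1 \<longrightarrow> (\<Sum>y\<leftarrow>xs. \<bar>y x\<bar>) \<le> 1)"

definition fbl_sums :: "(('a::real_normed_vector \<Rightarrow>\<^sub>L real) \<Rightarrow> real) \<Rightarrow> real set" where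
  "fbl_sums f = {(\<Sum>y\<leftarrow>xs. \<bar>f y\<bar>) | xs. fbl_admissible xs}"

definition fbl_norm :: "(('a::real_normed_vector \<Rightarrow>\<^sub>L real) \<Rightarrow> real) \<Rightarrow> real" where
  "fbl_norm f = Sup (fbl_sums f)"

definition H0 :: "(('a::real_normed_vector \<Rightarrow>\<^sub>L real) \<Rightarrow> real) set" where
  "H0 = {f. pos_homogeneous f \<and> bdd_above (fbl_sums f)}"

definition H0_pos :: "(('a::real_normed_vector \<Rightarrow>\<^sub>L real) \<Rightarrow> real) set" where
  "H0_pos = {f. f \<in> H0 \<and> (\<forall>x. 0 \<le> f x)}"

end

theory Submission
  imports Defs
begin

text \<open>Write \<open>N = fbl_norm f\<close> and, for a finite list \<open>L\<close> of functionals, \<open>g L = fbl_slack f L\<close>: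
  \<open>g L z = N * (\<Sum>y\<leftarrow>L. \<bar>z y\<bar>) - (\<Sum>y\<leftarrow>L. f y)\<close> on the unit ball \<open>K\<close> of the bidual, which is
  weak-star compact by Banach--Alaoglu. The functions \<open>g L\<close> form a convex cone of continuous
  functions, each with nonnegative supremum: on the canonical image of the unit ball of \<open>E\<close>
  this is the inequality \<open>(\<Sum>y\<leftarrow>L. f y) \<le> N * sup\<^sub>x (\<Sum>y\<leftarrow>L. \<bar>y x\<bar>)\<close> built into the definition of
  \<open>N\<close>. Hahn--Banach, applied to the sublinear functional \<open>h \<mapsto> inf\<^sub>L sup\<^sub>K (h + g L)\<close> on \<open>C(K)\<close>,
  gives a state on \<open>C(K)\<close> that is nonnegative on every \<open>g L\<close>. The Riesz representation theorem
  turns it into a regular Borel probability measure \<open>\<mu>\<close>, and \<open>0 \<le> \<integral> g [x\<^sup>*] d\<mu>\<close> is the claim.\<close>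

section \<open>Hahn--Banach for spaces of real functions\<close>

definition dominated_linear_graph ::
    "('b \<Rightarrow> real) set \<Rightarrow> (('b \<Rightarrow> real) \<Rightarrow> real) \<Rightarrow> (('b \<Rightarrow> real) \<times> real) set \<Rightarrow> bool" where
  "dominated_linear_graph V p G \<longleftrightarrow>
     (\<forall>x a. (x, a) \<in> G \<longrightarrow> x \<in> V \<and> a \<le> p x) \<and> ((\<lambda>_. 0), 0) \<in> G \<and>
     (\<forall>x a y b. (x, a) \<in> G \<longrightarrow> (y, b) \<in> G \<longrightarrow> ((\<lambda>u. x u + y u), a + b) \<in> G) \<and>
     (\<forall>x a c. (x, a) \<in> G \<longrightarrow> ((\<lambda>u. c * x u), c * a) \<in> G)"

lemma dominated_linear_graphI:
  assumes "\<And>x a. (x, a) \<in> G \<Longrightarrow> x \<in> V" and "\<And>x a. (x, a) \<in> G \<Longrightarrow> a \<le> p x"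
    and "((\<lambda>_. 0), 0) \<in> G"
    and "\<And>x a y b. (x, a) \<in> G \<Longrightarrow> (y, b) \<in> G \<Longrightarrow> ((\<lambda>u. x u + y u), a + b) \<in> G"
    and "\<And>x a c. (x, a) \<in> G \<Longrightarrow> ((\<lambda>u. c * x u), c * a) \<in> G"
  shows "dominated_linear_graph V p G"
  using assms unfolding dominated_linear_graph_def by blast

lemma dominated_linear_graphD:
  assumes "dominated_linear_graph V p G"
  shows dominated_linear_graph_in: "\<And>x a. (x, a) \<in> G \<Longrightarrow> x \<in> V"
    and dominated_linear_graph_le: "\<And>x a. (x, a) \<in> G \<Longrightarrow> a \<le> p x"
    and dominated_linear_graph_zero: "((\<lambda>_. 0), 0) \<in> G"
    and dominated_linear_graph_add:
      "\<And>x a y b. (x, a) \<in> G \<Longrightarrow> (y, b) \<in> G \<Longrightarrow> ((\<lambda>u. x u + y u), a + b) \<in> G"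
    and dominated_linear_graph_scale: "\<And>x a c. (x, a) \<in> G \<Longrightarrow> ((\<lambda>u. c * x u), c * a) \<in> G"
  using assms unfolding dominated_linear_graph_def by blast+

locale sublinear_functional =
  fixes V :: "('b \<Rightarrow> real) set" and p :: "('b \<Rightarrow> real) \<Rightarrow> real"
  assumes zero_in: "(\<lambda>_. 0) \<in> V"
    and add_in: "\<And>x y. x \<in> V \<Longrightarrow> y \<in> V \<Longrightarrow> (\<lambda>u. x u + y u) \<in> V"
    and scale_in: "\<And>c x. x \<in> V \<Longrightarrow> (\<lambda>u. c * x u) \<in> V"
    and subadditive: "\<And>x y. x \<in> V \<Longrightarrow> y \<in> V \<Longrightarrow> p (\<lambda>u. x u + y u) \<le> p x + p y"
    and homogeneous: "\<And>c x. x \<in> V \<Longrightarrow> c > 0 \<Longrightarrow> p (\<lambda>u. c * x u) = c * p x"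
begin

lemma p_zero: "p (\<lambda>_. 0) = 0"
  using homogeneous[OF zero_in, of 2] by simp

text \<open>Domination forces a linear graph to be single-valued: \<open>(0, a)\<close> and \<open>(0, -a)\<close> both lie
  below \<open>p 0 = 0\<close>.\<close>
lemma dominated_linear_graph_unique:
  assumes G: "dominated_linear_graph V p G" and "(x, a) \<in> G" "(x, b) \<in> G"
  shows "a = b"
proof -
  have "a - b \<le> 0" if "(x, a) \<in> G" "(x, b) \<in> G" for a b
  proof -
    have "((\<lambda>u. x u + (-1) * x u), a + (-1) * b) \<in> G"
      using that by (intro dominated_linear_graph_add[OF G] dominated_linear_graph_scale[OF G])
    then have "a + (-1) * b \<le> p (\<lambda>_. 0)"
      using dominated_linear_graph_le[OF G] by fastforce
    then show ?thesis using p_zero by simp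
  qed
  from this[OF assms(2,3)] this[OF assms(3,2)] show ?thesis by simp
qed

lemma p_add_scaled:
  assumes "s \<in> V" "w \<in> V" "k > 0"
  shows "p (\<lambda>u. s u + k * w u) = k * p (\<lambda>u. (1 / k) * s u + w u)"
proof -
  have "(\<lambda>u. (1 / k) * s u + w u) \<in> V" using assms by (intro add_in scale_in)
  moreover have "(\<lambda>u. s u + k * w u) = (\<lambda>u. k * ((1 / k) * s u + w u))"
    using assms(3) by (simp add: algebra_simps)
  ultimately show ?thesis using assms(3) homogeneous by presburger
qed

lemma dominated_linear_graph_adjoin:
  assumes G: "dominated_linear_graph V p G" and h: "h \<in> V"
    and lower: "\<And>s a. (s, a) \<in> G \<Longrightarrow> a - p (\<lambda>u. s u + (-1) * h u) \<le> c"
    and upper: "\<And>t b. (t, b) \<in> G \<Longrightarrow> c \<le> p (\<lambda>u. t u + h u) - b"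
  shows "dominated_linear_graph V p {((\<lambda>u. s u + l * h u), a + l * c) | s a l. (s, a) \<in> G}"
    (is "dominated_linear_graph V p ?G'")
proof -
  note GV = dominated_linear_graph_in[OF G] and Gscale = dominated_linear_graph_scale[OF G]
  have G'I: "((\<lambda>u. s u + l * h u), a + l * c) \<in> ?G'" if "(s, a) \<in> G" for s a l
    using that by blast
  have G'E: "\<exists>s a0 l. x = (\<lambda>u. s u + l * h u) \<and> a = a0 + l * c \<and> (s, a0) \<in> G"
    if "(x, a) \<in> ?G'" for x a
    using that by blast
  have dominated: "a + l * c \<le> p (\<lambda>u. s u + l * h u)" if sa: "(s, a) \<in> G" for s a l
  proof -
    have s: "s \<in> V" using GV sa by blast
    consider "l > 0" | "l = 0" | "l < 0" by linarith
    then show ?thesis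
    proof cases
      case 1
      have "c \<le> p (\<lambda>u. (1 / l) * s u + h u) - (1 / l) * a" using upper[OF Gscale[OF sa]] .
      then have "l * c \<le> l * p (\<lambda>u. (1 / l) * s u + h u) - a"
        using 1 by (simp add: field_simps)
      then show ?thesis using p_add_scaled[OF s h 1] by simp
    next
      case 2
      then show ?thesis using dominated_linear_graph_le[OF G sa] by simp
    next
      case 3
      then have k: "- l > 0" by simp
      have neg_h: "(\<lambda>u. (-1) * h u) \<in> V" using h by (rule scale_in)
      have "(1 / - l) * a - p (\<lambda>u. (1 / - l) * s u + (-1) * h u) \<le> c"
        using lower[OF Gscale[OF sa]] .
      then have "a - (- l) * p (\<lambda>u. (1 / - l) * s u + (-1) * h u) \<le> (- l) * c"
        using 3 by (simp add: field_simps)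
      then show ?thesis using p_add_scaled[OF s neg_h k] by simp
    qed
  qed
  show ?thesis
  proof (rule dominated_linear_graphI)
    show "x \<in> V" "a \<le> p x" if xa: "(x, a) \<in> ?G'" for x a
    proof -
      obtain s a0 l where "x = (\<lambda>u. s u + l * h u)" "a = a0 + l * c" "(s, a0) \<in> G"
        using G'E[OF xa] by blast
      then show "x \<in> V" "a \<le> p x" using GV h dominated by (auto intro!: add_in scale_in)
    qed
    show "((\<lambda>_. 0), 0) \<in> ?G'" using G'I[OF dominated_linear_graph_zero[OF G], of 0] by simp
    show "((\<lambda>u. x u + y u), a + b) \<in> ?G'" if xa: "(x, a) \<in> ?G'" and yb: "(y, b) \<in> ?G'"
      for x a y b
    proof -
      obtain s a0 l where x: "x = (\<lambda>u. s u + l * h u)" "a = a0 + l * c" "(s, a0) \<in> G"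
        using G'E[OF xa] by blast
      obtain t b0 k where y: "y = (\<lambda>u. t u + k * h u)" "b = b0 + k * c" "(t, b0) \<in> G"
        using G'E[OF yb] by blast
      have "((\<lambda>u. (s u + t u) + (l + k) * h u), (a0 + b0) + (l + k) * c) \<in> ?G'"
        using dominated_linear_graph_add[OF G x(3) y(3)] by (rule G'I)
      then show ?thesis unfolding x y by (simp add: algebra_simps)
    qed
    show "((\<lambda>u. r * x u), r * a) \<in> ?G'" if xa: "(x, a) \<in> ?G'" for x a r
    proof -
      obtain s a0 l where x: "x = (\<lambda>u. s u + l * h u)" "a = a0 + l * c" "(s, a0) \<in> G"
        using G'E[OF xa] by blast
      have "((\<lambda>u. r * s u + (r * l) * h u), r * a0 + (r * l) * c) \<in> ?G'"
        using Gscale[OF x(3)] by (rule G'I)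
      then show ?thesis unfolding x by (simp add: algebra_simps)
    qed
  qed
qed

text \<open>A value \<open>c\<close> as required above exists by sublinearity:
  \<open>a + b \<le> p (s + t) \<le> p (s - h) + p (t + h)\<close> for all \<open>(s, a), (t, b) \<in> G\<close>.\<close>
lemma dominated_linear_graph_extend:
  assumes G: "dominated_linear_graph V p G" and h: "h \<in> V" "h \<notin> fst ` G"
  shows "\<exists>G'. dominated_linear_graph V p G' \<and> G \<subset> G'"
proof -
  note GV = dominated_linear_graph_in[OF G] and G0 = dominated_linear_graph_zero[OF G]
  have squeeze: "a - p (\<lambda>u. s u + (-1) * h u) \<le> p (\<lambda>u. t u + h u) - b"
    if "(s, a) \<in> G" "(t, b) \<in> G" for s a t b
  proof -
    have "a + b \<le> p (\<lambda>u. s u + t u)"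
      using dominated_linear_graph_le[OF G dominated_linear_graph_add[OF G that]] .
    also have "(\<lambda>u. s u + t u) = (\<lambda>u. (s u + (-1) * h u) + (t u + h u))" by simp
    also have "p \<dots> \<le> p (\<lambda>u. s u + (-1) * h u) + p (\<lambda>u. t u + h u)"
      using GV that h by (intro subadditive add_in scale_in) auto
    finally show ?thesis by simp
  qed
  define S where "S = {a - p (\<lambda>u. s u + (-1) * h u) | s a. (s, a) \<in> G}"
  have "bdd_above S" unfolding S_def bdd_above_def using squeeze[OF _ G0] by auto
  then have "a - p (\<lambda>u. s u + (-1) * h u) \<le> Sup S" if "(s, a) \<in> G" for s a
    using that S_def by (intro cSup_upper) auto
  moreover have "Sup S \<le> p (\<lambda>u. t u + h u) - b" if "(t, b) \<in> G" for t b
    using G0 squeeze that S_def by (intro cSup_least) auto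
  ultimately have G': "dominated_linear_graph V p
      {((\<lambda>u. s u + l * h u), a + l * Sup S) | s a l. (s, a) \<in> G}"
        (is "dominated_linear_graph V p ?G'")
    by (rule dominated_linear_graph_adjoin[OF G h(1)])
  have G'I: "((\<lambda>u. s u + l * h u), a + l * Sup S) \<in> ?G'" if "(s, a) \<in> G" for s a l
    using that by blast
  have "(s, a) \<in> ?G'" if "(s, a) \<in> G" for s a
    using G'I[OF that, of 0] by simp
  then have "G \<subseteq> ?G'" by auto
  moreover have "(h, Sup S) \<in> ?G'" using G'I[OF G0, of 1] by simp
  then have "G \<noteq> ?G'" using h(2) by (metis fst_conv image_eqI)
  ultimately show ?thesis using G' by blast
qed

lemma dominated_linear_graph_chain_Union:
  assumes "C \<noteq> {}" and chain: "subset.chain {G. dominated_linear_graph V p G} C"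
  shows "dominated_linear_graph V p (\<Union>C)"
proof -
  have G: "dominated_linear_graph V p G" if "G \<in> C" for G
    using chain that by (auto simp: subset.chain_def)
  have common: "\<exists>G\<in>C. (x, a) \<in> G \<and> (y, b) \<in> G" if xy: "(x, a) \<in> \<Union>C" "(y, b) \<in> \<Union>C" for x a y b
  proof -
    obtain G H where "G \<in> C" "H \<in> C" "(x, a) \<in> G" "(y, b) \<in> H" using xy by blast
    moreover have "G \<subseteq> H \<or> H \<subseteq> G" using chain calculation(1,2) by (auto simp: subset.chain_def)
    ultimately show ?thesis by blast
  qed
  show ?thesis
  proof (rule dominated_linear_graphI)
    fix x a assume "(x, a) \<in> \<Union>C"
    then obtain G where "G \<in> C" "(x, a) \<in> G" by blast
    then show "x \<in> V" "a \<le> p x" "((\<lambda>u. c * x u), c * a) \<in> \<Union>C" for c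
      using G dominated_linear_graph_in dominated_linear_graph_le dominated_linear_graph_scale
      by blast+
  next
    show "((\<lambda>_. 0), 0) \<in> \<Union>C" using assms(1) G dominated_linear_graph_zero by blast
  next
    fix x a y b assume "(x, a) \<in> \<Union>C" "(y, b) \<in> \<Union>C"
    then show "((\<lambda>u. x u + y u), a + b) \<in> \<Union>C"
      using common G dominated_linear_graph_add by blast
  qed
qed

theorem hahn_banach:
  obtains \<phi> where "\<And>x y. x \<in> V \<Longrightarrow> y \<in> V \<Longrightarrow> \<phi> (\<lambda>u. x u + y u) = \<phi> x + \<phi> y"
    and "\<And>c x. x \<in> V \<Longrightarrow> \<phi> (\<lambda>u. c * x u) = c * \<phi> x"
    and "\<And>x. x \<in> V \<Longrightarrow> \<phi> x \<le> p x"
proof -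
  have "dominated_linear_graph V p {((\<lambda>_. 0), 0)}"
    using zero_in p_zero by (intro dominated_linear_graphI) auto
  then obtain M where M: "dominated_linear_graph V p M"
    and max: "\<And>G. dominated_linear_graph V p G \<Longrightarrow> M \<subseteq> G \<Longrightarrow> G = M"
    using subset_Zorn_nonempty[of "{G. dominated_linear_graph V p G}"]
      dominated_linear_graph_chain_Union by blast
  have total: "\<exists>a. (x, a) \<in> M" if "x \<in> V" for x
  proof (rule ccontr)
    assume "\<nexists>a. (x, a) \<in> M"
    then have "x \<notin> fst ` M" by force
    then show False using dominated_linear_graph_extend[OF M that] max by blast
  qed
  define \<phi> where "\<phi> x = (THE a. (x, a) \<in> M)" for x
  have \<phi>_eq: "\<phi> x = a" if "(x, a) \<in> M" for x a
    unfolding \<phi>_def using that by (auto intro: dominated_linear_graph_unique[OF M])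
  have graph: "(x, \<phi> x) \<in> M" if "x \<in> V" for x
    using total[OF that] \<phi>_eq by blast
  show ?thesis
  proof (rule that)
    show "\<phi> (\<lambda>u. x u + y u) = \<phi> x + \<phi> y" if "x \<in> V" "y \<in> V" for x y
      using that by (intro \<phi>_eq dominated_linear_graph_add[OF M] graph)
    show "\<phi> (\<lambda>u. c * x u) = c * \<phi> x" if "x \<in> V" for c x
      using that by (intro \<phi>_eq dominated_linear_graph_scale[OF M] graph)
    show "\<phi> x \<le> p x" if "x \<in> V" for x
      using that by (intro dominated_linear_graph_le[OF M] graph)
  qed
qed

end


section \<open>Riesz representation of states on \<open>C(K)\<close>\<close>

lemma continuous_map_real_bounded:
  assumes "compact_space X" "continuous_map X euclideanreal h"
  obtains B where "\<And>x. x \<in> topspace X \<Longrightarrow> \<bar>h x\<bar> \<le> B"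
proof -
  have "compactin euclideanreal (h ` topspace X)"
    using image_compactin assms compact_space_def by blast
  then have "bounded (h ` topspace X)" by (simp add: compact_imp_bounded)
  then show ?thesis using that unfolding bounded_iff by auto
qed

lemma bdd_above_continuous_map_image:
  assumes "compact_space X" "continuous_map X euclideanreal h"
  shows "bdd_above (h ` topspace X)"
proof -
  obtain B where "\<And>x. x \<in> topspace X \<Longrightarrow> \<bar>h x\<bar> \<le> B"
    using continuous_map_real_bounded[OF assms] by blast
  then show ?thesis by (intro bdd_aboveI[of _ B]) (auto dest: abs_le_D1)
qed

lemma sets_borel_of: "sets (borel_of X) = sigma_sets (topspace X) {U. openin X U}"
  unfolding borel_of_def by (rule sets_measure_of) (auto dest: openin_subset)

lemma borel_measurable_continuous_map:
  assumes "sets M = sets (borel_of X)" "space M = topspace X" "continuous_map X euclideanreal h"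
  shows "h \<in> borel_measurable M"
proof (rule borel_measurableI)
  fix S :: "real set" assume "open S"
  then have "openin X {x \<in> topspace X. h x \<in> S}"
    using assms(3) by (intro openin_continuous_map_preimage) auto
  then show "h -` S \<inter> space M \<in> sets M"
    unfolding assms(1,2) sets_borel_of
    by (auto intro: sigma_sets.Basic simp: Int_commute Collect_conj_eq vimage_def)
qed

lemma integrable_continuous_map:
  assumes "finite_measure M" "sets M = sets (borel_of X)" "space M = topspace X"
    and "compact_space X" "continuous_map X euclideanreal h"
  shows "integrable M h"
proof -
  obtain B where "\<And>x. x \<in> topspace X \<Longrightarrow> \<bar>h x\<bar> \<le> B"
    using continuous_map_real_bounded[OF assms(4,5)] by blast
  then show ?thesis
    using assms borel_measurable_continuous_map[OF assms(2,3,5)]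
    by (intro finite_measure.integrable_const_bound[where B = B]) auto
qed

lemma sum_truncated_layers:
  fixes a d :: real
  assumes d: "0 \<le> d"
  shows "(\<Sum>i<n. min (max (a - real i * d) 0) d) = min (max a 0) (real n * d)"
proof (induction n)
  case (Suc n)
  have step: "min (max a 0) c + min (max (a - c) 0) d = min (max a 0) (c + d)" if "0 \<le> c" for c
    using that d by (auto simp: min_def max_def)
  have "real (Suc n) * d = real n * d + d" by (simp add: algebra_simps)
  then show ?case using Suc step[of "real n * d"] d by simp
qed simp

locale sup_dominated_functional =
  fixes X :: "'b topology" and \<phi> :: "('b \<Rightarrow> real) \<Rightarrow> real"
  assumes compact: "compact_space X" and Hausdorff: "Hausdorff_space X"
    and nonempty: "topspace X \<noteq> {}"
    and additive: "\<And>h k. continuous_map X euclideanreal h \<Longrightarrow> continuous_map X euclideanreal k \<Longrightarrow>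
      \<phi> (\<lambda>x. h x + k x) = \<phi> h + \<phi> k"
    and homogeneous: "\<And>c h. continuous_map X euclideanreal h \<Longrightarrow> \<phi> (\<lambda>x. c * h x) = c * \<phi> h"
    and bounded_by_Sup: "\<And>h. continuous_map X euclideanreal h \<Longrightarrow> \<phi> h \<le> Sup (h ` topspace X)"
begin

abbreviation "K \<equiv> topspace X"
abbreviation "continuous_real h \<equiv> continuous_map X euclideanreal h"

lemma \<phi>_diff:
  assumes "continuous_real h" "continuous_real k"
  shows "\<phi> (\<lambda>x. h x - k x) = \<phi> h - \<phi> k"
proof -
  have "\<phi> (\<lambda>x. h x + (-1) * k x) = \<phi> h + \<phi> (\<lambda>x. (-1) * k x)"
    using assms by (intro additive continuous_intros)
  then show ?thesis using homogeneous[OF assms(2), of "-1"] by simp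
qed

lemma \<phi>_nonpos:
  assumes "continuous_real h" "\<And>x. x \<in> K \<Longrightarrow> h x \<le> 0"
  shows "\<phi> h \<le> 0"
proof -
  have "Sup (h ` K) \<le> 0" using nonempty assms(2) by (intro cSup_least) auto
  then show ?thesis using bounded_by_Sup[OF assms(1)] by simp
qed

lemma \<phi>_mono:
  assumes "continuous_real h" "continuous_real k" "\<And>x. x \<in> K \<Longrightarrow> h x \<le> k x"
  shows "\<phi> h \<le> \<phi> k"
  using \<phi>_nonpos[of "\<lambda>x. h x - k x"] \<phi>_diff[OF assms(1,2)] assms by (auto intro: continuous_intros)

lemma \<phi>_cong:
  assumes "continuous_real h" "continuous_real k" "\<And>x. x \<in> K \<Longrightarrow> h x = k x"
  shows "\<phi> h = \<phi> k"
  using \<phi>_mono[of h k] \<phi>_mono[of k h] assms by force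

lemma \<phi>_zero: "\<phi> (\<lambda>_. 0) = 0"
  using homogeneous[of "\<lambda>_. 0" 0] by simp

lemma \<phi>_const: "\<phi> (\<lambda>_. c) = c"
proof -
  have "\<phi> (\<lambda>_. 1) \<le> 1" "\<phi> (\<lambda>_. -1) \<le> -1"
    using bounded_by_Sup[of "\<lambda>_. 1"] bounded_by_Sup[of "\<lambda>_. -1"] nonempty by simp_all
  moreover have "\<phi> (\<lambda>_. -1) = - \<phi> (\<lambda>_. 1)" using homogeneous[of "\<lambda>_. 1" "-1"] by simp
  ultimately have "\<phi> (\<lambda>_. 1) = 1" by simp
  then show ?thesis using homogeneous[of "\<lambda>_. 1" c] by simp
qed

lemma \<phi>_sum:
  assumes "finite F" "\<And>i. i \<in> F \<Longrightarrow> continuous_real (k i)"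
  shows "\<phi> (\<lambda>x. \<Sum>i\<in>F. k i x) = (\<Sum>i\<in>F. \<phi> (k i))"
  using assms
proof (induction F rule: finite_induct)
  case empty
  then show ?case using \<phi>_zero by simp
next
  case (insert j F)
  then have "\<phi> (\<lambda>x. k j x + (\<Sum>i\<in>F. k i x)) = \<phi> (k j) + \<phi> (\<lambda>x. \<Sum>i\<in>F. k i x)"
    by (intro additive continuous_intros) auto
  then show ?case using insert by simp
qed

lemma \<phi>_le_truncation:
  assumes "continuous_real h" "e \<ge> 0"
  shows "\<phi> h \<le> \<phi> (\<lambda>x. max (h x - e) 0) + e"
proof -
  have "\<phi> h \<le> \<phi> (\<lambda>x. max (h x - e) 0 + e)"
    using assms by (intro \<phi>_mono continuous_intros) auto
  also have "\<dots> = \<phi> (\<lambda>x. max (h x - e) 0) + e"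
    using assms additive[of "\<lambda>x. max (h x - e) 0" "\<lambda>_. e"] \<phi>_const by (simp add: continuous_intros)
  finally show ?thesis .
qed

text \<open>Rudin's \<open>h \<prec> U\<close>.\<close>
definition subordinate :: "'b set \<Rightarrow> ('b \<Rightarrow> real) \<Rightarrow> bool" where
  "subordinate U h \<longleftrightarrow> continuous_real h \<and> (\<forall>x\<in>K. 0 \<le> h x \<and> h x \<le> 1) \<and> (\<forall>x\<in>K - U. h x = 0)"

definition inner_content :: "'b set \<Rightarrow> real" where
  "inner_content U = Sup {\<phi> h | h. subordinate U h}"

lemma subordinate_zero: "subordinate U (\<lambda>_. 0)"
  unfolding subordinate_def by simp

lemma subordinate_truncation:
  assumes "subordinate U h" "e \<ge> 0"
  shows "subordinate U (\<lambda>x. max (h x - e) 0)"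
  using assms unfolding subordinate_def by (auto intro!: continuous_intros)

lemma \<phi>_subordinate_le_1: "subordinate U h \<Longrightarrow> \<phi> h \<le> 1"
  using \<phi>_mono[of h "\<lambda>_. 1"] \<phi>_const[of 1] unfolding subordinate_def by auto

lemma inner_content_upper: "subordinate U h \<Longrightarrow> \<phi> h \<le> inner_content U"
  unfolding inner_content_def using \<phi>_subordinate_le_1
  by (intro cSup_upper) (auto intro: bdd_aboveI[of _ 1])

lemma inner_content_least: "(\<And>h. subordinate U h \<Longrightarrow> \<phi> h \<le> c) \<Longrightarrow> inner_content U \<le> c"
  unfolding inner_content_def using subordinate_zero by (intro cSup_least) auto

lemma inner_content_approx:
  assumes "e > 0"
  obtains h where "subordinate U h" "inner_content U - e < \<phi> h"
proof -
  have "inner_content U - e < Sup {\<phi> h | h. subordinate U h}"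
    using assms unfolding inner_content_def by simp
  from less_cSupD[OF _ this] show ?thesis using subordinate_zero that by blast
qed

lemma inner_content_nonneg: "0 \<le> inner_content U"
  using inner_content_upper[OF subordinate_zero] \<phi>_zero by simp

lemma inner_content_le_1: "inner_content U \<le> 1"
  using inner_content_least \<phi>_subordinate_le_1 by blast

lemma inner_content_mono: "U \<subseteq> V \<Longrightarrow> inner_content U \<le> inner_content V"
  by (rule inner_content_least, rule inner_content_upper) (auto simp: subordinate_def)

lemma inner_content_empty: "inner_content {} = 0"
proof -
  have "\<phi> h \<le> 0" if "subordinate {} h" for h
    using that \<phi>_nonpos[of h] unfolding subordinate_def by auto
  then show ?thesis using inner_content_least[of "{}" 0] inner_content_nonneg[of "{}"] by simp
qed

lemma inner_content_space: "inner_content K = 1"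
proof -
  have "subordinate K (\<lambda>_. 1)" unfolding subordinate_def by simp
  then show ?thesis using inner_content_upper \<phi>_const[of 1] inner_content_le_1[of K] by fastforce
qed

lemma bump_function:
  assumes U: "openin X U" and x: "x \<in> U"
  obtains g where "continuous_real g" "\<And>y. y \<in> K \<Longrightarrow> 0 \<le> g y" "g x = 1"
    "\<And>y. y \<in> K - U \<Longrightarrow> g y = 0"
proof -
  have "completely_regular_space X"
    using compact Hausdorff
    by (simp add: compact_Hausdorff_or_regular_imp_normal_space normal_imp_completely_regular_space)
  moreover have "closedin X (K - U)" "x \<in> K - (K - U)" using U x openin_subset by auto
  ultimately obtain f :: "'b \<Rightarrow> real" where f: "continuous_map X (top_of_set {0..1}) f"
    "f x = 0" "f ` (K - U) \<subseteq> {1}"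
    unfolding completely_regular_space_def by metis
  have "f y \<in> {0..1}" if "y \<in> K" for y
    using continuous_map_image_subset_topspace[OF f(1)] that by auto
  then show ?thesis
    using f continuous_map_into_fulltopology[OF f(1)]
    by (intro that[of "\<lambda>y. 1 - f y"] continuous_intros) auto
qed

text \<open>A partition-of-unity substitute: one bump function per point of a finite subcover,
  grouped by the index of the covering set.\<close>
lemma finite_bump_cover:
  assumes S: "compactin X S" and U: "\<And>i. openin X (U i)" and cover: "S \<subseteq> (\<Union>i. U i)"
  obtains F :: "'i set" and g where "finite F" "\<And>j. continuous_real (g j)"
    "\<And>j y. y \<in> K \<Longrightarrow> 0 \<le> g j y" "\<And>j y. y \<in> K - U j \<Longrightarrow> g j y = 0"
    "\<And>y. y \<in> S \<Longrightarrow> \<exists>j\<in>F. 1 \<le> g j y"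
proof -
  have "\<forall>x\<in>S. \<exists>i. x \<in> U i" using cover by blast
  then obtain ix where ix: "\<And>x. x \<in> S \<Longrightarrow> x \<in> U (ix x)" by metis
  have "\<exists>g. continuous_real g \<and> (\<forall>y\<in>K. 0 \<le> g y) \<and> g x = 1 \<and> (\<forall>y\<in>K - U (ix x). g y = 0)"
    if x: "x \<in> S" for x
  proof -
    obtain g where "continuous_real g" "\<And>y. y \<in> K \<Longrightarrow> 0 \<le> g y" "g x = 1"
      "\<And>y. y \<in> K - U (ix x) \<Longrightarrow> g y = 0"
      using bump_function[OF U ix[OF x]] by blast
    then show ?thesis by blast
  qed
  then obtain b where b: "\<And>x. x \<in> S \<Longrightarrow> continuous_real (b x)"
    "\<And>x y. x \<in> S \<Longrightarrow> y \<in> K \<Longrightarrow> 0 \<le> b x y" "\<And>x. x \<in> S \<Longrightarrow> b x x = 1"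
    "\<And>x y. x \<in> S \<Longrightarrow> y \<in> K - U (ix x) \<Longrightarrow> b x y = 0"
    by metis
  define W where "W x = {y \<in> K. b x y \<in> {1/2<..}}" for x
  have W: "openin X (W x)" if "x \<in> S" for x
    unfolding W_def by (rule openin_continuous_map_preimage[OF b(1)[OF that]]) simp
  have "S \<subseteq> \<Union>(W ` S)"
  proof
    fix x assume x: "x \<in> S"
    then have "x \<in> W x" using b(3)[OF x] compactin_subset_topspace[OF S] by (auto simp: W_def)
    then show "x \<in> \<Union>(W ` S)" using x by blast
  qed
  then obtain F where F: "finite F" "F \<subseteq> W ` S" "S \<subseteq> \<Union>F"
    using S W unfolding compactin_def by (metis (no_types, lifting) image_iff)
  then obtain P where P: "P \<subseteq> S" "finite P" "S \<subseteq> \<Union>(W ` P)"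
    using finite_subset_image[OF F(1,2)] by blast
  define g where "g j y = 2 * (\<Sum>x\<in>{x\<in>P. ix x = j}. b x y)" for j y
  show ?thesis
  proof (rule that[of "ix ` P" g])
    show "finite (ix ` P)" using P by simp
    show "continuous_real (g j)" for j
      unfolding g_def[abs_def] using b(1) P by (intro continuous_intros) auto
    show "0 \<le> g j y" if "y \<in> K" for j y
      unfolding g_def using b(2) P(1) that by (auto intro: sum_nonneg)
    show "g j y = 0" if "y \<in> K - U j" for j y
      unfolding g_def using b(4) P(1) that by (auto intro: sum.neutral)
    show "\<exists>j\<in>ix ` P. 1 \<le> g j y" if y: "y \<in> S" for y
    proof -
      obtain x where x: "x \<in> P" "y \<in> W x" using P(3) y by blast
      then have "b x y \<le> (\<Sum>x'\<in>{x'\<in>P. ix x' = ix x}. b x' y)"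
        using P b(2) by (intro member_le_sum) (auto simp: W_def)
      moreover have "1 < 2 * b x y" using x by (auto simp: W_def)
      ultimately have "1 \<le> g (ix x) y" unfolding g_def by linarith
      then show ?thesis using x(1) by blast
    qed
  qed
qed

lemma inner_content_Union_approx:
  assumes U: "\<And>i. openin X (U i)" and h: "subordinate (\<Union>i. U i) h" and e: "e > 0"
  obtains F where "finite F" "\<phi> h \<le> e + (\<Sum>i\<in>F. inner_content (U i))"
proof -
  have hC: "continuous_real h" using h by (simp add: subordinate_def)
  define S where "S = {x \<in> K. h x \<in> {e..}}"
  have "closedin X S" unfolding S_def by (rule closedin_continuous_map_preimage[OF hC]) simp
  then have S: "compactin X S" by (rule closedin_compact_space[OF compact])
  have S_cover: "S \<subseteq> (\<Union>i. U i)"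
  proof
    fix x assume x: "x \<in> S"
    then have "h x \<noteq> 0" using e by (simp add: S_def)
    then show "x \<in> (\<Union>i. U i)" using h x by (auto simp: S_def subordinate_def)
  qed
  obtain F g where F: "finite F" and g: "\<And>j. continuous_real (g j)"
    "\<And>j y. y \<in> K \<Longrightarrow> 0 \<le> g j y" "\<And>j y. y \<in> K - U j \<Longrightarrow> g j y = 0"
    "\<And>y. y \<in> S \<Longrightarrow> \<exists>j\<in>F. 1 \<le> g j y"
    by (rule finite_bump_cover[OF S U S_cover]) blast
  define h' where "h' x = max (h x - e) 0" for x
  define k where "k j x = min (h' x) (g j x)" for j x
  have h': "subordinate (\<Union>i. U i) h'"
    unfolding h'_def[abs_def] using subordinate_truncation[OF h] e by simp
  have k: "subordinate (U j) (k j)" for j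
    using h' g unfolding k_def[abs_def] subordinate_def by (auto intro!: continuous_intros)
  have k_nonneg: "0 \<le> k j y" if "y \<in> K" for j y
    using k that by (simp add: subordinate_def)
  have "h' y \<le> (\<Sum>j\<in>F. k j y)" if y: "y \<in> K" for y
  proof (cases "y \<in> S")
    case True
    then obtain j where j: "j \<in> F" "1 \<le> g j y" using g(4) by blast
    have "h' y \<le> 1" using h' y by (simp add: subordinate_def)
    then have "h' y = k j y" using j(2) by (simp add: k_def)
    also have "\<dots> \<le> (\<Sum>j\<in>F. k j y)" using k_nonneg[OF y] by (intro member_le_sum[OF j(1) _ F])
    finally show ?thesis .
  next
    case False
    then have "h' y = 0" using y by (simp add: S_def h'_def)
    then show ?thesis using k_nonneg[OF y] by (simp add: sum_nonneg)
  qed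
  then have "\<phi> h' \<le> \<phi> (\<lambda>y. \<Sum>j\<in>F. k j y)"
    using h' k F by (intro \<phi>_mono continuous_intros) (auto simp: subordinate_def)
  also have "\<dots> = (\<Sum>j\<in>F. \<phi> (k j))"
    using k by (intro \<phi>_sum[OF F]) (simp add: subordinate_def)
  also have "\<dots> \<le> (\<Sum>j\<in>F. inner_content (U j))"
    using k inner_content_upper by (intro sum_mono) auto
  finally have "\<phi> h' \<le> (\<Sum>j\<in>F. inner_content (U j))" .
  moreover have "\<phi> h \<le> \<phi> h' + e"
    using \<phi>_le_truncation[OF hC] e unfolding h'_def[abs_def] by simp
  ultimately show ?thesis by (intro that[OF F]) linarith
qed

lemma inner_content_countable_subadditive:
  assumes U: "\<And>i. openin X (U i)" and s: "summable (\<lambda>i. inner_content (U i))"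
  shows "inner_content (\<Union>i. U i) \<le> (\<Sum>i. inner_content (U i))"
proof (rule inner_content_least)
  fix h assume h: "subordinate (\<Union>i. U i) h"
  show "\<phi> h \<le> (\<Sum>i. inner_content (U i))"
  proof (rule field_le_epsilon)
    fix e :: real assume "0 < e"
    then obtain F where F: "finite F" "\<phi> h \<le> e + (\<Sum>i\<in>F. inner_content (U i))"
      by (rule inner_content_Union_approx[OF U h]) blast
    have "(\<Sum>i\<in>F. inner_content (U i)) \<le> (\<Sum>i. inner_content (U i))"
      using s F(1) inner_content_nonneg by (intro sum_le_suminf) auto
    then show "\<phi> h \<le> (\<Sum>i. inner_content (U i)) + e" using F by simp
  qed
qed

lemma inner_content_Un_le:
  assumes "openin X V" "openin X W"
  shows "inner_content (V \<union> W) \<le> inner_content V + inner_content W"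
proof (rule inner_content_least)
  fix h assume h: "subordinate (V \<union> W) h"
  define U where "U b = (if b then V else W)" for b
  have U: "openin X (U b)" for b using assms by (simp add: U_def)
  have "subordinate (\<Union>b. U b) h" using h by (simp add: U_def UNIV_bool Un_commute)
  show "\<phi> h \<le> inner_content V + inner_content W"
  proof (rule field_le_epsilon)
    fix e :: real assume "0 < e"
    then obtain F where F: "\<phi> h \<le> e + (\<Sum>b\<in>F. inner_content (U b))"
      by (rule inner_content_Union_approx[OF U \<open>subordinate (\<Union>b. U b) h\<close>]) blast
    have "(\<Sum>b\<in>F. inner_content (U b)) \<le> (\<Sum>b\<in>UNIV. inner_content (U b))"
      using inner_content_nonneg by (intro sum_mono2) auto
    then show "\<phi> h \<le> inner_content V + inner_content W + e"
      using F by (simp add: UNIV_bool U_def)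
  qed
qed

definition outer_content :: "'b set \<Rightarrow> real" where
  "outer_content A = Inf {inner_content U | U. openin X U \<and> A \<subseteq> U}"

lemma outer_content_le: "openin X U \<Longrightarrow> A \<subseteq> U \<Longrightarrow> outer_content A \<le> inner_content U"
  unfolding outer_content_def using inner_content_nonneg
  by (intro cInf_lower) (auto intro: bdd_belowI[of _ 0])

lemma outer_content_greatest:
  "A \<subseteq> K \<Longrightarrow> (\<And>U. openin X U \<Longrightarrow> A \<subseteq> U \<Longrightarrow> c \<le> inner_content U) \<Longrightarrow> c \<le> outer_content A"
  unfolding outer_content_def by (intro cInf_greatest) auto

lemma outer_content_approx:
  assumes "A \<subseteq> K" "e > 0"
  obtains U where "openin X U" "A \<subseteq> U" "inner_content U < outer_content A + e"
proof -
  have "Inf {inner_content U | U. openin X U \<and> A \<subseteq> U} < outer_content A + e"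
    using assms unfolding outer_content_def by simp
  from cInf_lessD[OF _ this] show ?thesis using assms(1) that by blast
qed

lemma outer_content_nonneg: "A \<subseteq> K \<Longrightarrow> 0 \<le> outer_content A"
  using outer_content_greatest inner_content_nonneg by blast

lemma outer_content_open:
  assumes "openin X U"
  shows "outer_content U = inner_content U"
proof (rule antisym)
  show "outer_content U \<le> inner_content U" using outer_content_le[OF assms] by simp
  show "inner_content U \<le> outer_content U"
    using assms openin_subset inner_content_mono by (intro outer_content_greatest) auto
qed

lemma outer_content_mono: "A \<subseteq> B \<Longrightarrow> B \<subseteq> K \<Longrightarrow> outer_content A \<le> outer_content B"
  using outer_content_greatest[of B "outer_content A"] outer_content_le[of _ A] by blast

lemma outer_content_Un_le:
  assumes "A \<subseteq> K" "B \<subseteq> K"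
  shows "outer_content (A \<union> B) \<le> outer_content A + outer_content B"
proof (rule field_le_epsilon)
  fix e :: real assume "0 < e"
  then have e2: "e / 2 > 0" by simp
  obtain V where "openin X V" "A \<subseteq> V" "inner_content V < outer_content A + e / 2"
    by (rule outer_content_approx[OF assms(1) e2]) blast
  moreover obtain W where "openin X W" "B \<subseteq> W" "inner_content W < outer_content B + e / 2"
    by (rule outer_content_approx[OF assms(2) e2]) blast
  moreover have "outer_content (A \<union> B) \<le> inner_content (V \<union> W)"
    using calculation by (intro outer_content_le) auto
  ultimately show "outer_content (A \<union> B) \<le> outer_content A + outer_content B + e"
    using inner_content_Un_le[of V W] by linarith
qed

text \<open>The open set \<open>U\<close> splits every \<open>A\<close> additively. Given \<open>V \<supseteq> A\<close>, take \<open>h \<prec> V \<inter> U\<close> almost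
  attaining \<open>inner_content (V \<inter> U)\<close> and \<open>k \<prec> V - {h \<ge> e}\<close>, an open superset of \<open>A - U\<close>;
  then \<open>max (h - e) 0 + k \<prec> V\<close>.\<close>
lemma outer_content_Int_Diff_le:
  assumes U: "openin X U" and A: "A \<subseteq> K"
  shows "outer_content (U \<inter> A) + outer_content ((K - U) \<inter> A) \<le> outer_content A"
proof (rule field_le_epsilon)
  fix e0 :: real assume "0 < e0"
  define e where "e = e0 / 4"
  have e: "0 < e" using \<open>0 < e0\<close> e_def by simp
  obtain V where V: "openin X V" "A \<subseteq> V" "inner_content V < outer_content A + e"
    by (rule outer_content_approx[OF A e]) blast
  obtain h where h: "subordinate (V \<inter> U) h" "inner_content (V \<inter> U) - e < \<phi> h"
    by (rule inner_content_approx[OF e]) blast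
  define h' where "h' x = max (h x - e) 0" for x
  have h': "subordinate (V \<inter> U) h'"
    unfolding h'_def[abs_def] using subordinate_truncation[OF h(1)] e by simp
  define V' where "V' = V - {x \<in> K. h x \<in> {e..}}"
  have V': "openin X V'"
    unfolding V'_def using h(1) V(1)
    by (intro openin_diff closedin_continuous_map_preimage) (auto simp: subordinate_def)
  obtain k where k: "subordinate V' k" "inner_content V' - e < \<phi> k"
    by (rule inner_content_approx[OF e]) blast
  have "h' x + k x \<le> 1" if "x \<in> K" for x
  proof (cases "e \<le> h x")
    case True
    then have "k x = 0" using k(1) that unfolding subordinate_def V'_def by auto
    then show ?thesis using h(1) that e unfolding subordinate_def h'_def by auto
  next
    case False
    then show ?thesis using k(1) that unfolding subordinate_def h'_def by auto
  qed
  then have "subordinate V (\<lambda>x. h' x + k x)"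
    using h' k unfolding subordinate_def V'_def by (auto intro: continuous_intros add_nonneg_nonneg)
  then have "\<phi> (\<lambda>x. h' x + k x) \<le> inner_content V" by (rule inner_content_upper)
  moreover have "\<phi> (\<lambda>x. h' x + k x) = \<phi> h' + \<phi> k"
    using h' k by (intro additive) (simp_all add: subordinate_def)
  moreover have "\<phi> h \<le> \<phi> h' + e"
    using \<phi>_le_truncation[of h e] h(1) e unfolding h'_def[abs_def] by (simp add: subordinate_def)
  moreover have "outer_content (U \<inter> A) \<le> inner_content (V \<inter> U)"
    using V U by (intro outer_content_le openin_Int) auto
  moreover have "(K - U) \<inter> A \<subseteq> V'"
  proof
    fix x assume x: "x \<in> (K - U) \<inter> A"
    then have "h x = 0" using h(1) A by (simp add: subordinate_def)
    then show "x \<in> V'" using x V(2) e by (auto simp: V'_def)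
  qed
  then have "outer_content ((K - U) \<inter> A) \<le> inner_content V'"
    using V' by (intro outer_content_le)
  ultimately show "outer_content (U \<inter> A) + outer_content ((K - U) \<inter> A) \<le> outer_content A + e0"
    using h(2) k(2) V(3) e_def by linarith
qed

lemma outer_content_countable_subadditive:
  assumes A: "\<And>i. A i \<subseteq> K" and s: "summable (\<lambda>i. outer_content (A i))"
  shows "outer_content (\<Union>i. A i) \<le> (\<Sum>i. outer_content (A i))"
proof (rule field_le_epsilon)
  fix e :: real assume e: "0 < e"
  have "\<exists>U. openin X U \<and> A i \<subseteq> U \<and> inner_content U < outer_content (A i) + e * (1/2)^Suc i"
    for i
  proof -
    have "e * (1/2)^Suc i > 0" using e by simp
    then obtain V where "openin X V" "A i \<subseteq> V"
        "inner_content V < outer_content (A i) + e * (1/2)^Suc i"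
      by (rule outer_content_approx[OF A]) blast
    then show ?thesis by blast
  qed
  then obtain U where U: "\<And>i. openin X (U i)" "\<And>i. A i \<subseteq> U i"
    "\<And>i. inner_content (U i) < outer_content (A i) + e * (1/2)^Suc i"
    by metis
  have g: "summable (\<lambda>i. e * (1/2::real)^Suc i)" "(\<Sum>i. e * (1/2::real)^Suc i) = e"
    using sums_mult[OF power_half_series, of e] by (auto simp: sums_iff)
  have s2: "summable (\<lambda>i. outer_content (A i) + e * (1/2)^Suc i)" using s g(1)
    by (rule summable_add)
  have sU: "summable (\<lambda>i. inner_content (U i))"
    using U(3) inner_content_nonneg
    by (intro summable_comparison_test[OF _ s2] exI[of _ 0]) (auto intro: less_imp_le)
  have "outer_content (\<Union>i. A i) \<le> inner_content (\<Union>i. U i)"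
    using U by (intro outer_content_le) auto
  also have "\<dots> \<le> (\<Sum>i. inner_content (U i))"
    by (rule inner_content_countable_subadditive[OF U(1) sU])
  also have "\<dots> \<le> (\<Sum>i. outer_content (A i) + e * (1/2)^Suc i)"
    by (rule suminf_le[OF _ sU s2]) (use U(3) less_imp_le in auto)
  also have "\<dots> = (\<Sum>i. outer_content (A i)) + e" using suminf_add[OF s g(1)] g(2) by simp
  finally show "outer_content (\<Union>i. A i) \<le> (\<Sum>i. outer_content (A i)) + e" .
qed

definition riesz_outer_measure :: "'b set \<Rightarrow> ennreal" where
  "riesz_outer_measure A = ennreal (outer_content A)"

lemma outer_measure_space_riesz_outer_measure: "outer_measure_space (Pow K) riesz_outer_measure"
  unfolding outer_measure_space_def
proof (intro conjI)
  show "positive (Pow K) riesz_outer_measure"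
    unfolding positive_def riesz_outer_measure_def
    using outer_content_open[of "{}"] inner_content_empty by simp
  show "increasing (Pow K) riesz_outer_measure"
    unfolding increasing_def riesz_outer_measure_def
      by (auto intro!: ennreal_leI outer_content_mono)
  show "countably_subadditive (Pow K) riesz_outer_measure"
    unfolding countably_subadditive_def
  proof (intro allI impI)
    fix A :: "nat \<Rightarrow> 'b set" assume "range A \<subseteq> Pow K"
    then have A: "\<And>i. A i \<subseteq> K" by auto
    show "riesz_outer_measure (\<Union>i. A i) \<le> (\<Sum>i. riesz_outer_measure (A i))"
    proof (cases "summable (\<lambda>i. outer_content (A i))")
      case True
      then have "(\<Sum>i. riesz_outer_measure (A i)) = ennreal (\<Sum>i. outer_content (A i))"
        unfolding riesz_outer_measure_def using outer_content_nonneg[OF A]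
        by (intro suminf_ennreal2) auto
      then show ?thesis
        unfolding riesz_outer_measure_def
        using outer_content_countable_subadditive[OF A True] by (simp add: ennreal_leI)
    next
      case False
      then have "(\<Sum>i. riesz_outer_measure (A i)) = top"
        unfolding riesz_outer_measure_def using outer_content_nonneg[OF A]
        by (intro summable_iff_suminf_neq_top) auto
      then show ?thesis by simp
    qed
  qed
qed

lemma openin_lambda_system:
  assumes U: "openin X U"
  shows "U \<in> lambda_system K (Pow K) riesz_outer_measure"
  unfolding lambda_system_def
proof (intro CollectI conjI ballI)
  show "U \<in> Pow K" using openin_subset[OF U] by simp
  fix A assume "A \<in> Pow K"
  then have A: "A \<subseteq> K" by simp
  have "(U \<inter> A) \<union> ((K - U) \<inter> A) = A" using A by blast
  then have "outer_content A \<le> outer_content (U \<inter> A) + outer_content ((K - U) \<inter> A)"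
    using outer_content_Un_le[of "U \<inter> A" "(K - U) \<inter> A"] A by auto
  then have "outer_content (U \<inter> A) + outer_content ((K - U) \<inter> A) = outer_content A"
    using outer_content_Int_Diff_le[OF U A] by linarith
  moreover have "0 \<le> outer_content (U \<inter> A)" "0 \<le> outer_content ((K - U) \<inter> A)"
    using A by (auto intro: outer_content_nonneg)
  ultimately show "riesz_outer_measure (U \<inter> A) + riesz_outer_measure ((K - U) \<inter> A) =
      riesz_outer_measure A"
    unfolding riesz_outer_measure_def by (simp add: ennreal_plus[symmetric])
qed

definition riesz_measure :: "'b measure" where
  "riesz_measure = measure_of K {U. openin X U} riesz_outer_measure"

lemma opens_subset_Pow: "{U. openin X U} \<subseteq> Pow K"
  by (auto dest: openin_subset)

lemma sets_riesz_measure: "sets riesz_measure = sigma_sets K {U. openin X U}"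
  unfolding riesz_measure_def by (rule sets_measure_of[OF opens_subset_Pow])

lemma space_riesz_measure: "space riesz_measure = K"
  unfolding riesz_measure_def by (rule space_measure_of[OF opens_subset_Pow])

lemma sets_riesz_measure_borel: "sets riesz_measure = sets (borel_of X)"
  unfolding sets_riesz_measure sets_borel_of ..

lemma measure_space_riesz_outer_measure:
  "measure_space K (sigma_sets K {U. openin X U}) riesz_outer_measure"
proof -
  have lambda: "measure_space K (lambda_system K (Pow K) riesz_outer_measure) riesz_outer_measure"
    using sigma_algebra.caratheodory_lemma[OF sigma_algebra_Pow
        outer_measure_space_riesz_outer_measure]
    by simp
  then have "sigma_sets K {U. openin X U} \<subseteq> lambda_system K (Pow K) riesz_outer_measure"
    using openin_lambda_system unfolding measure_space_def
    by (intro sigma_algebra.sigma_sets_subset) auto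
  then show ?thesis
    using measure_down[OF lambda sigma_algebra_sigma_sets[OF opens_subset_Pow]] by blast
qed

lemma emeasure_riesz_measure:
  assumes "A \<in> sets riesz_measure"
  shows "emeasure riesz_measure A = ennreal (outer_content A)"
proof -
  have "emeasure riesz_measure A = riesz_outer_measure A"
  proof (rule emeasure_measure_of[OF riesz_measure_def opens_subset_Pow])
    show "positive (sets riesz_measure) riesz_outer_measure"
      "countably_additive (sets riesz_measure) riesz_outer_measure"
      using measure_space_riesz_outer_measure unfolding measure_space_def sets_riesz_measure by auto
  qed (rule assms)
  then show ?thesis by (simp add: riesz_outer_measure_def)
qed

lemma sets_riesz_measure_subset: "A \<in> sets riesz_measure \<Longrightarrow> A \<subseteq> K"
  using sets.sets_into_space space_riesz_measure by blast

lemma openin_in_riesz_measure: "openin X U \<Longrightarrow> U \<in> sets riesz_measure"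
  unfolding sets_riesz_measure by (rule sigma_sets.Basic) simp

lemma measure_riesz_measure: "A \<in> sets riesz_measure \<Longrightarrow> measure riesz_measure A = outer_content A"
  using emeasure_riesz_measure outer_content_nonneg sets_riesz_measure_subset
  by (simp add: measure_def)

lemma prob_space_riesz_measure: "prob_space riesz_measure"
proof
  show "emeasure riesz_measure (space riesz_measure) = 1"
    using emeasure_riesz_measure[OF openin_in_riesz_measure] space_riesz_measure
      outer_content_open[of K] inner_content_space by simp
qed

lemma riesz_measure_outer_regular:
  assumes A: "A \<in> sets riesz_measure"
  shows "emeasure riesz_measure A = (INF U\<in>{U. openin X U \<and> A \<subseteq> U}. emeasure riesz_measure U)"
proof (rule antisym)
  have A_K: "A \<subseteq> K" using sets_riesz_measure_subset[OF A] .
  have open_eq: "emeasure riesz_measure U = ennreal (inner_content U)" if "openin X U" for U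
    using emeasure_riesz_measure[OF openin_in_riesz_measure[OF that]] outer_content_open[OF that]
    by simp
  show "emeasure riesz_measure A \<le> (INF U\<in>{U. openin X U \<and> A \<subseteq> U}. emeasure riesz_measure U)"
    using emeasure_riesz_measure[OF A] open_eq outer_content_le
    by (intro INF_greatest) (auto intro: ennreal_leI)
  show "(INF U\<in>{U. openin X U \<and> A \<subseteq> U}. emeasure riesz_measure U) \<le> emeasure riesz_measure A"
  proof (rule ennreal_le_epsilon)
    fix e :: real assume e: "0 < e"
    obtain U where U: "openin X U" "A \<subseteq> U" "inner_content U < outer_content A + e"
      by (rule outer_content_approx[OF A_K e]) blast
    have "(INF U\<in>{U. openin X U \<and> A \<subseteq> U}. emeasure riesz_measure U) \<le> emeasure riesz_measure U"
      using U by (intro INF_lower) auto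
    also have "\<dots> \<le> ennreal (outer_content A + e)"
      using U(3) open_eq[OF U(1)] by (simp add: ennreal_leI)
    also have "\<dots> = emeasure riesz_measure A + ennreal e"
      using emeasure_riesz_measure[OF A] outer_content_nonneg[OF A_K] e by (simp add: ennreal_plus)
    finally show "(INF U\<in>{U. openin X U \<and> A \<subseteq> U}. emeasure riesz_measure U)
        \<le> emeasure riesz_measure A + ennreal e" .
  qed
qed

text \<open>Inner regularity follows from outer regularity of the complement, as \<open>K\<close> is compact.\<close>
lemma riesz_measure_inner_regular:
  assumes A: "A \<in> sets riesz_measure"
  shows "emeasure riesz_measure A = (SUP C\<in>{C. compactin X C \<and> C \<subseteq> A}. emeasure riesz_measure C)"
proof (rule antisym)
  interpret prob_space riesz_measure by (rule prob_space_riesz_measure)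
  have compact_in: "C \<in> sets riesz_measure" if "compactin X C" for C
  proof -
    have "openin X (K - C)" using compactin_imp_closedin[OF Hausdorff that]
      by (rule openin_diff[OF openin_topspace])
    then have "K - (K - C) \<in> sets riesz_measure"
      using sets.compl_sets[OF openin_in_riesz_measure] space_riesz_measure by metis
    then show ?thesis using compactin_subset_topspace[OF that] by (simp add: double_diff)
  qed
  show "(SUP C\<in>{C. compactin X C \<and> C \<subseteq> A}. emeasure riesz_measure C) \<le> emeasure riesz_measure A"
    using compact_in A by (intro SUP_least emeasure_mono) auto
  show "emeasure riesz_measure A \<le> (SUP C\<in>{C. compactin X C \<and> C \<subseteq> A}. emeasure riesz_measure C)"
  proof (rule ennreal_le_epsilon)
    fix e :: real assume e: "0 < e"
    have KA: "K - A \<in> sets riesz_measure" using sets.compl_sets[OF A] space_riesz_measure by simp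
    obtain U where U: "openin X U" "K - A \<subseteq> U" "inner_content U < outer_content (K - A) + e"
      by (rule outer_content_approx[OF _ e, of "K - A"]) blast+
    have U_in: "U \<in> sets riesz_measure" using openin_in_riesz_measure[OF U(1)] .
    have "closedin X (K - U)" using U(1) by (rule closedin_diff[OF closedin_topspace])
    then have C: "compactin X (K - U)" by (rule closedin_compact_space[OF compact])
    have "prob (K - U) = 1 - inner_content U"
      using prob_compl[OF U_in] space_riesz_measure measure_riesz_measure[OF U_in]
        outer_content_open[OF U(1)] by simp
    moreover have "prob (K - A) = 1 - prob A" using prob_compl[OF A] space_riesz_measure by simp
    moreover have "prob (K - A) = outer_content (K - A)" by (rule measure_riesz_measure[OF KA])
    ultimately have "prob A \<le> prob (K - U) + e" using U(3) by linarith
    have "emeasure riesz_measure A = ennreal (prob A)" by (rule emeasure_eq_measure)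
    also have "\<dots> \<le> ennreal (prob (K - U) + e)" using \<open>prob A \<le> prob (K - U) + e\<close>
      by (rule ennreal_leI)
    also have "\<dots> = emeasure riesz_measure (K - U) + ennreal e"
      using e by (simp add: emeasure_eq_measure ennreal_plus)
    also have "emeasure riesz_measure (K - U)
        \<le> (SUP C\<in>{C. compactin X C \<and> C \<subseteq> A}. emeasure riesz_measure C)"
      using C U(2) by (intro SUP_upper) auto
    finally show "emeasure riesz_measure A
        \<le> (SUP C\<in>{C. compactin X C \<and> C \<subseteq> A}. emeasure riesz_measure C) + ennreal e"
      by (simp add: add_right_mono)
  qed
qed

lemma regular_riesz_measure: "regular_measure_on X riesz_measure"
  unfolding regular_measure_on_def using riesz_measure_inner_regular riesz_measure_outer_regular
    by blast

lemma integrable_continuous_riesz: "continuous_real h \<Longrightarrow> integrable riesz_measure h"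
  using prob_space.finite_measure[OF prob_space_riesz_measure] sets_riesz_measure_borel
    space_riesz_measure compact
  by (rule integrable_continuous_map)

lemma \<phi>_layer_le:
  assumes h: "continuous_real h" and d: "d > 0"
  shows "\<phi> (\<lambda>x. min (max (h x - t) 0) d) \<le> d * inner_content {x \<in> K. t < h x}"
proof -
  define l where "l x = min (max (h x - t) 0) d" for x
  have "subordinate {x \<in> K. t < h x} (\<lambda>x. (1 / d) * l x)"
    unfolding subordinate_def l_def using h d by (auto intro!: continuous_intros simp: field_simps)
  then have "\<phi> (\<lambda>x. (1 / d) * l x) \<le> inner_content {x \<in> K. t < h x}"
    by (rule inner_content_upper)
  moreover have "\<phi> l = d * \<phi> (\<lambda>x. (1 / d) * l x)"
    using homogeneous[of "\<lambda>x. (1 / d) * l x" d] h d unfolding l_def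
    by (simp add: continuous_intros)
  ultimately show ?thesis using d unfolding l_def by (simp add: mult_left_mono)
qed

lemma integral_layer_ge:
  assumes h: "continuous_real h" and d: "d > 0"
  shows "d * inner_content {x \<in> K. t + d < h x} \<le> (\<integral>x. min (max (h x - t) 0) d \<partial>riesz_measure)"
proof -
  interpret prob_space riesz_measure by (rule prob_space_riesz_measure)
  define U where "U = {x \<in> K. t + d < h x}"
  have U: "openin X U"
    unfolding U_def using openin_continuous_map_preimage[OF h, of "{t + d<..}"] by simp
  then have U_in: "U \<in> sets riesz_measure" by (rule openin_in_riesz_measure)
  have "d * inner_content U = (\<integral>x. d * indicator U x \<partial>riesz_measure)"
    using measure_riesz_measure[OF U_in] outer_content_open[OF U] sets_riesz_measure_subset[OF U_in]
      space_riesz_measure by (simp add: Int_absorb2)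
  also have "\<dots> \<le> (\<integral>x. min (max (h x - t) 0) d \<partial>riesz_measure)"
  proof (rule integral_mono)
    show "integrable riesz_measure (\<lambda>x. d * indicator U x)"
      using U_in by (intro integrable_mult_right integrable_real_indicator)
        (auto simp: emeasure_eq_measure)
    show "integrable riesz_measure (\<lambda>x. min (max (h x - t) 0) d)"
      using h by (intro integrable_continuous_riesz continuous_intros)
    show "d * indicator U x \<le> min (max (h x - t) 0) d" for x
      using d by (cases "x \<in> U") (auto simp: U_def)
  qed
  finally show ?thesis unfolding U_def .
qed

text \<open>Cut \<open>h\<close> into \<open>n\<close> horizontal layers of height \<open>d = M / n\<close>: the \<open>i\<close>-th layer is bounded
  above by \<open>d \<cdot> inner_content {h > i d}\<close> under \<open>\<phi>\<close> and below by \<open>d \<cdot> inner_content {h > (i + 1) d}\<close>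
  under the integral, so the two sums differ by at most one layer.\<close>
lemma \<phi>_le_integral_plus:
  assumes h: "continuous_real h" and h_bounds: "\<And>x. x \<in> K \<Longrightarrow> 0 \<le> h x \<and> h x \<le> M"
    and M: "M > 0"
  shows "\<phi> h \<le> M / Suc m + (\<integral>x. h x \<partial>riesz_measure)"
proof -
  define n where "n = Suc m"
  define d where "d = M / n"
  have d: "d > 0" and nd: "real n * d = M" using M by (simp_all add: d_def n_def)
  define l where "l i x = min (max (h x - real i * d) 0) d" for i x
  define U where "U i = {x \<in> K. real i * d < h x}" for i
  have l: "continuous_real (l i)" for i unfolding l_def[abs_def] using h
    by (intro continuous_intros)
  have h_sum: "h x = (\<Sum>i<n. l i x)" if "x \<in> K" for x
    using sum_truncated_layers[of d "h x" n] d nd h_bounds[OF that] unfolding l_def by simp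
  have "\<phi> h = \<phi> (\<lambda>x. \<Sum>i<n. l i x)"
    using h l h_sum by (intro \<phi>_cong continuous_intros) auto
  also have "\<dots> = (\<Sum>i<n. \<phi> (l i))" using l by (intro \<phi>_sum) auto
  also have "\<dots> \<le> (\<Sum>i<n. d * inner_content (U i))"
    unfolding l_def U_def using \<phi>_layer_le[OF h d] by (intro sum_mono) auto
  also have "\<dots> = d * inner_content (U 0) + (\<Sum>i<m. d * inner_content (U (Suc i)))"
    unfolding n_def by (subst sum.lessThan_Suc_shift) simp
  also have "\<dots> \<le> d + (\<Sum>i<n. (\<integral>x. l i x \<partial>riesz_measure))"
  proof (intro add_mono)
    show "d * inner_content (U 0) \<le> d" using inner_content_le_1 d by simp
    have "(\<Sum>i<m. d * inner_content (U (Suc i))) \<le> (\<Sum>i<m. (\<integral>x. l i x \<partial>riesz_measure))"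
    proof (rule sum_mono)
      fix i
      show "d * inner_content (U (Suc i)) \<le> (\<integral>x. l i x \<partial>riesz_measure)"
        using integral_layer_ge[OF h d, of "real i * d"]
        by (simp add: U_def l_def distrib_right add.commute)
    qed
    also have "\<dots> \<le> (\<Sum>i<n. (\<integral>x. l i x \<partial>riesz_measure))"
      unfolding n_def using d by (simp add: l_def)
    finally show "(\<Sum>i<m. d * inner_content (U (Suc i))) \<le> (\<Sum>i<n. (\<integral>x. l i x \<partial>riesz_measure))" .
  qed
  also have "(\<Sum>i<n. (\<integral>x. l i x \<partial>riesz_measure)) = (\<integral>x. (\<Sum>i<n. l i x) \<partial>riesz_measure)"
    using integrable_continuous_riesz[OF l] by (subst Bochner_Integration.integral_sum) auto
  also have "\<dots> = (\<integral>x. h x \<partial>riesz_measure)"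
    using h_sum space_riesz_measure by (intro Bochner_Integration.integral_cong) auto
  finally show ?thesis unfolding d_def n_def by simp
qed

lemma \<phi>_le_integral:
  assumes h: "continuous_real h" and nonneg: "\<And>x. x \<in> K \<Longrightarrow> 0 \<le> h x"
  shows "\<phi> h \<le> (\<integral>x. h x \<partial>riesz_measure)"
proof (rule field_le_epsilon)
  fix e :: real assume e: "e > 0"
  obtain B where B: "\<And>x. x \<in> K \<Longrightarrow> \<bar>h x\<bar> \<le> B"
    using continuous_map_real_bounded[OF compact h] by blast
  define M where "M = max B 0 + 1"
  have M: "M > 0" unfolding M_def by simp
  have h_bounds: "0 \<le> h x \<and> h x \<le> M" if "x \<in> K" for x
    using nonneg[OF that] abs_le_D1[OF B[OF that]] unfolding M_def by linarith
  obtain m where "M / e < real m" using reals_Archimedean2 by blast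
  then have "M / Suc m \<le> e" using M e by (simp add: field_simps)
  then show "\<phi> h \<le> (\<integral>x. h x \<partial>riesz_measure) + e"
    using \<phi>_le_integral_plus[OF h h_bounds M, of m] by linarith
qed

lemma \<phi>_le_integral_continuous:
  assumes h: "continuous_real h"
  shows "\<phi> h \<le> (\<integral>x. h x \<partial>riesz_measure)"
proof -
  interpret prob_space riesz_measure by (rule prob_space_riesz_measure)
  obtain B where B: "\<And>x. x \<in> K \<Longrightarrow> \<bar>h x\<bar> \<le> B"
    using continuous_map_real_bounded[OF compact h] by blast
  have "0 \<le> h x + B" if "x \<in> K" for x using B[OF that] by linarith
  then have "\<phi> (\<lambda>x. h x + B) \<le> (\<integral>x. h x + B \<partial>riesz_measure)"
    using h by (intro \<phi>_le_integral continuous_intros) auto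
  moreover have "\<phi> (\<lambda>x. h x + B) = \<phi> h + B"
    using additive[OF h, of "\<lambda>_. B"] \<phi>_const by simp
  moreover have "(\<integral>x. h x + B \<partial>riesz_measure) = (\<integral>x. h x \<partial>riesz_measure) + B"
    using integrable_continuous_riesz h by (simp add: prob_space)
  ultimately show ?thesis by simp
qed

theorem riesz_representation:
  "\<exists>\<mu>. prob_space \<mu> \<and> sets \<mu> = sets (borel_of X) \<and> space \<mu> = K \<and> regular_measure_on X \<mu> \<and>
     (\<forall>h. continuous_real h \<longrightarrow> (\<integral>x. h x \<partial>\<mu>) = \<phi> h)"
proof (intro exI[of _ riesz_measure] conjI allI impI)
  show "(\<integral>x. h x \<partial>riesz_measure) = \<phi> h" if h: "continuous_real h" for h
  proof (rule antisym)
    have "\<phi> (\<lambda>x. (-1) * h x) \<le> (\<integral>x. (-1) * h x \<partial>riesz_measure)"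
      using h by (intro \<phi>_le_integral_continuous continuous_intros)
    then show "(\<integral>x. h x \<partial>riesz_measure) \<le> \<phi> h" using homogeneous[OF h, of "-1"] by simp
  qed (rule \<phi>_le_integral_continuous[OF h])
qed (use prob_space_riesz_measure sets_riesz_measure_borel space_riesz_measure
      regular_riesz_measure in auto)

end


section \<open>Probability measures nonnegative on a cone of continuous functions\<close>

locale sup_nonneg_cone =
  fixes X :: "'b topology" and G :: "('b \<Rightarrow> real) set"
  assumes compact: "compact_space X" and Hausdorff: "Hausdorff_space X"
    and nonempty: "topspace X \<noteq> {}"
    and continuous: "\<And>g. g \<in> G \<Longrightarrow> continuous_map X euclideanreal g"
    and zero_in: "(\<lambda>_. 0) \<in> G"
    and add_in: "\<And>g g'. g \<in> G \<Longrightarrow> g' \<in> G \<Longrightarrow> (\<lambda>x. g x + g' x) \<in> G"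
    and scale_in: "\<And>c g. g \<in> G \<Longrightarrow> c > 0 \<Longrightarrow> (\<lambda>x. c * g x) \<in> G"
    and Sup_nonneg: "\<And>g. g \<in> G \<Longrightarrow> 0 \<le> Sup (g ` topspace X)"
begin

abbreviation "K \<equiv> topspace X"
abbreviation "continuous_real h \<equiv> continuous_map X euclideanreal h"

text \<open>A linear functional below \<open>cone_gauge\<close> is a state on \<open>C(K)\<close> that is nonnegative on \<open>G\<close>.\<close>
definition cone_gauge :: "('b \<Rightarrow> real) \<Rightarrow> real" where
  "cone_gauge h = Inf ((\<lambda>g. Sup ((\<lambda>x. h x + g x) ` K)) ` G)"

lemma bdd_above_plus:
  "continuous_real h \<Longrightarrow> g \<in> G \<Longrightarrow> bdd_above ((\<lambda>x. h x + g x) ` K)"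
  using compact continuous by (intro bdd_above_continuous_map_image continuous_intros) auto

lemma Sup_plus_lower_bound:
  assumes h: "continuous_real h" and B: "\<And>x. x \<in> K \<Longrightarrow> \<bar>h x\<bar> \<le> B" and g: "g \<in> G"
  shows "- B \<le> Sup ((\<lambda>x. h x + g x) ` K)"
proof -
  have "Sup (g ` K) \<le> Sup ((\<lambda>x. h x + g x) ` K) + B"
  proof (rule cSUP_least[OF nonempty])
    fix x assume x: "x \<in> K"
    have "h x + g x \<le> Sup ((\<lambda>x. h x + g x) ` K)"
      using x bdd_above_plus[OF h g] by (rule cSUP_upper)
    then show "g x \<le> Sup ((\<lambda>x. h x + g x) ` K) + B" using B[OF x] by linarith
  qed
  then show ?thesis using Sup_nonneg[OF g] by linarith
qed

lemma cone_gauge_le: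
  assumes h: "continuous_real h" and g: "g \<in> G"
  shows "cone_gauge h \<le> Sup ((\<lambda>x. h x + g x) ` K)"
proof -
  obtain B where "\<And>x. x \<in> K \<Longrightarrow> \<bar>h x\<bar> \<le> B"
    using continuous_map_real_bounded[OF compact h] by blast
  then have "bdd_below ((\<lambda>g. Sup ((\<lambda>x. h x + g x) ` K)) ` G)"
    using Sup_plus_lower_bound[OF h] by (intro bdd_belowI[of _ "- B"]) auto
  then show ?thesis unfolding cone_gauge_def using g by (rule cINF_lower)
qed

lemma cone_gauge_greatest:
  "(\<And>g. g \<in> G \<Longrightarrow> c \<le> Sup ((\<lambda>x. h x + g x) ` K)) \<Longrightarrow> c \<le> cone_gauge h"
  unfolding cone_gauge_def using zero_in by (intro cINF_greatest) auto

lemma cone_gauge_le_Sup: "continuous_real h \<Longrightarrow> cone_gauge h \<le> Sup (h ` K)"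
  using cone_gauge_le[OF _ zero_in] by simp

lemma cone_gauge_uminus_nonpos: "g \<in> G \<Longrightarrow> cone_gauge (\<lambda>x. - g x) \<le> 0"
  using cone_gauge_le[of "\<lambda>x. - g x" g] continuous nonempty by (auto intro: continuous_intros)

lemma cone_gauge_subadditive:
  assumes h: "continuous_real h" and k: "continuous_real k"
  shows "cone_gauge (\<lambda>x. h x + k x) \<le> cone_gauge h + cone_gauge k"
proof -
  have split: "cone_gauge (\<lambda>x. h x + k x) \<le> Sup ((\<lambda>x. h x + g x) ` K) + Sup ((\<lambda>x. k x + g' x) ` K)"
    if g: "g \<in> G" and g': "g' \<in> G" for g g'
  proof -
    have "cone_gauge (\<lambda>x. h x + k x) \<le> Sup ((\<lambda>x. (h x + k x) + (g x + g' x)) ` K)"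
      using h k add_in[OF g g'] by (intro cone_gauge_le continuous_intros)
    also have "\<dots> \<le> Sup ((\<lambda>x. h x + g x) ` K) + Sup ((\<lambda>x. k x + g' x) ` K)"
    proof (rule cSUP_least[OF nonempty])
      fix x assume x: "x \<in> K"
      have "h x + g x \<le> Sup ((\<lambda>x. h x + g x) ` K)"
        using x bdd_above_plus[OF h g] by (rule cSUP_upper)
      moreover have "k x + g' x \<le> Sup ((\<lambda>x. k x + g' x) ` K)"
        using x bdd_above_plus[OF k g'] by (rule cSUP_upper)
      ultimately
      show "(h x + k x) + (g x + g' x) \<le> Sup ((\<lambda>x. h x + g x) ` K) + Sup ((\<lambda>x. k x + g' x) ` K)"
        by linarith
    qed
    finally show ?thesis .
  qed
  have "cone_gauge (\<lambda>x. h x + k x) - Sup ((\<lambda>x. h x + g x) ` K) \<le> cone_gauge k"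
    if g: "g \<in> G" for g
  proof (intro cone_gauge_greatest)
    fix g' assume "g' \<in> G"
    from split[OF g this] show "cone_gauge (\<lambda>x. h x + k x) - Sup ((\<lambda>x. h x + g x) ` K)
        \<le> Sup ((\<lambda>x. k x + g' x) ` K)"
      by linarith
  qed
  then have "cone_gauge (\<lambda>x. h x + k x) - cone_gauge k \<le> cone_gauge h"
    by (intro cone_gauge_greatest) (simp add: algebra_simps)
  then show ?thesis by simp
qed

lemma cone_gauge_scale_le:
  assumes h: "continuous_real h" and c: "c > 0"
  shows "cone_gauge (\<lambda>x. c * h x) \<le> c * cone_gauge h"
proof -
  have "cone_gauge (\<lambda>x. c * h x) / c \<le> Sup ((\<lambda>x. h x + g x) ` K)" if g: "g \<in> G" for g
  proof -
    have "cone_gauge (\<lambda>x. c * h x) \<le> Sup ((\<lambda>x. c * h x + c * g x) ` K)"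
      using h scale_in[OF g c] by (intro cone_gauge_le continuous_intros)
    also have "\<dots> \<le> c * Sup ((\<lambda>x. h x + g x) ` K)"
    proof (rule cSUP_least[OF nonempty])
      fix x assume "x \<in> K"
      then have "h x + g x \<le> Sup ((\<lambda>x. h x + g x) ` K)"
        using bdd_above_plus[OF h g] by (rule cSUP_upper)
      then show "c * h x + c * g x \<le> c * Sup ((\<lambda>x. h x + g x) ` K)"
        using c by (simp add: distrib_left[symmetric])
    qed
    finally show ?thesis using c by (simp add: field_simps)
  qed
  then have "cone_gauge (\<lambda>x. c * h x) / c \<le> cone_gauge h" by (rule cone_gauge_greatest)
  then show ?thesis using c by (simp add: field_simps)
qed

lemma sublinear_cone_gauge: "sublinear_functional {h. continuous_real h} cone_gauge"
proof (unfold_locales, unfold mem_Collect_eq)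
  fix c :: real and h assume h: "continuous_real h" and c: "c > 0"
  show "cone_gauge (\<lambda>x. c * h x) = c * cone_gauge h"
  proof (rule antisym)
    have "cone_gauge (\<lambda>x. (1 / c) * (c * h x)) \<le> (1 / c) * cone_gauge (\<lambda>x. c * h x)"
      using h c by (intro cone_gauge_scale_le continuous_intros) auto
    then show "c * cone_gauge h \<le> cone_gauge (\<lambda>x. c * h x)"
      using c by (simp add: field_simps)
  qed (rule cone_gauge_scale_le[OF h c])
next
  fix h k assume "continuous_real h" "continuous_real k"
  then show "continuous_real (\<lambda>x. h x + k x)"
    and "cone_gauge (\<lambda>x. h x + k x) \<le> cone_gauge h + cone_gauge k"
    by (auto intro: continuous_intros cone_gauge_subadditive)
qed (auto intro: continuous_intros)

theorem exists_measure_integral_nonneg: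
  "\<exists>\<mu>. prob_space \<mu> \<and> sets \<mu> = sets (borel_of X) \<and> space \<mu> = K \<and> regular_measure_on X \<mu> \<and>
     (\<forall>g\<in>G. 0 \<le> (\<integral>x. g x \<partial>\<mu>))"
proof -
  interpret S: sublinear_functional "{h. continuous_real h}" cone_gauge
    by (rule sublinear_cone_gauge)
  obtain \<phi> where additive: "\<And>h k. h \<in> {h. continuous_real h} \<Longrightarrow> k \<in> {h. continuous_real h} \<Longrightarrow>
        \<phi> (\<lambda>x. h x + k x) = \<phi> h + \<phi> k"
    and homogeneous: "\<And>c h. h \<in> {h. continuous_real h} \<Longrightarrow> \<phi> (\<lambda>x. c * h x) = c * \<phi> h"
    and below: "\<And>h. h \<in> {h. continuous_real h} \<Longrightarrow> \<phi> h \<le> cone_gauge h"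
    using S.hahn_banach by blast
  interpret R: sup_dominated_functional X \<phi>
  proof
    fix h assume "continuous_real h"
    then show "\<phi> h \<le> Sup (h ` K)" using below cone_gauge_le_Sup by fastforce
  qed (use compact Hausdorff nonempty additive homogeneous in auto)
  obtain \<mu> where \<mu>: "prob_space \<mu>" "sets \<mu> = sets (borel_of X)" "space \<mu> = K"
    "regular_measure_on X \<mu>" and integral: "\<And>h. continuous_real h \<Longrightarrow> (\<integral>x. h x \<partial>\<mu>) = \<phi> h"
    using R.riesz_representation by blast
  have "0 \<le> (\<integral>x. g x \<partial>\<mu>)" if g: "g \<in> G" for g
  proof -
    have g_cont: "continuous_real g" by (rule continuous[OF g])
    have "\<phi> (\<lambda>x. - g x) \<le> 0"
      using below[of "\<lambda>x. - g x"] cone_gauge_uminus_nonpos[OF g] g_cont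
      by (auto intro: continuous_intros)
    moreover have "\<phi> (\<lambda>x. - g x) = - \<phi> g" using homogeneous[of g "-1"] g_cont by simp
    ultimately show ?thesis using integral[OF g_cont] by simp
  qed
  then show ?thesis using \<mu> by blast
qed

end


section \<open>Weak-star compactness of the dual ball\<close>

definition weak_star_dual_ball :: "('b::real_normed_vector \<Rightarrow>\<^sub>L real) topology" where
  "weak_star_dual_ball =
     pullback_topology (cball 0 1) blinfun_apply (product_topology (\<lambda>_. euclideanreal) UNIV)"

lemma weak_star_bidual_ball_eq: "weak_star_bidual_ball = weak_star_dual_ball"
  unfolding weak_star_bidual_ball_def weak_star_dual_ball_def ..

lemma topspace_weak_star_dual_ball: "topspace weak_star_dual_ball = cball 0 1"
  unfolding weak_star_dual_ball_def topspace_pullback_topology by simp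

lemma continuous_map_weak_star_dual_ball_apply:
  "continuous_map weak_star_dual_ball euclideanreal (\<lambda>z. blinfun_apply z y)"
proof -
  have "continuous_map weak_star_dual_ball euclideanreal ((\<lambda>g. g y) \<circ> blinfun_apply)"
    unfolding weak_star_dual_ball_def
    by (rule continuous_map_pullback) (rule continuous_map_product_projection, simp)
  then show ?thesis by (simp add: o_def)
qed

lemma Hausdorff_space_weak_star_dual_ball: "Hausdorff_space weak_star_dual_ball"
proof (rule Hausdorff_space_injective_preimage)
  show "Hausdorff_space (product_topology (\<lambda>_. euclideanreal) UNIV)"
    by (simp add: Hausdorff_space_product_topology)
  show "continuous_map weak_star_dual_ball (product_topology (\<lambda>_. euclideanreal) UNIV)
      blinfun_apply"
    unfolding weak_star_dual_ball_def using continuous_map_pullback[OF continuous_map_id] by simp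
  show "inj_on blinfun_apply (topspace weak_star_dual_ball)"
    by (simp add: inj_on_def blinfun_apply_inject)
qed

definition unit_ball_functionals :: "('b::real_normed_vector \<Rightarrow> real) set" where
  "unit_ball_functionals = {g. (\<forall>y. \<bar>g y\<bar> \<le> norm y) \<and> (\<forall>x y. g (x + y) = g x + g y) \<and>
     (\<forall>c x. g (c *\<^sub>R x) = c * g x)}"

lemma compactin_unit_ball_functionals:
  "compactin (product_topology (\<lambda>_. euclideanreal) UNIV) unit_ball_functionals"
proof -
  let ?P = "product_topology (\<lambda>_::'b. euclideanreal) UNIV"
  have closed_eq: "closedin ?P {g. F g = H g}"
    if "continuous_map ?P euclideanreal F" "continuous_map ?P euclideanreal H" for F H
    using closedin_continuous_map_preimage[of ?P euclideanreal "\<lambda>g. F g - H g" "{0}"] that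
    by (simp add: continuous_map_diff)
  have closed_INT: "closedin ?P (\<Inter>i. S i)" if "\<And>i. closedin ?P (S i)" for S :: "'c \<Rightarrow> _"
    using that by (intro closedin_Inter) auto
  have "closedin ?P ((\<Inter>x. \<Inter>y. {g. g (x + y) = g x + g y}) \<inter> (\<Inter>c. \<Inter>x. {g. g (c *\<^sub>R x) = c * g x}))"
    by (intro closedin_Int closed_INT closed_eq continuous_intros) auto
  moreover have "compactin ?P (PiE UNIV (\<lambda>y. {- norm y .. norm y}))"
    by (simp add: compactin_PiE)
  ultimately have "compactin ?P (((\<Inter>x. \<Inter>y. {g. g (x + y) = g x + g y}) \<inter>
      (\<Inter>c. \<Inter>x. {g. g (c *\<^sub>R x) = c * g x})) \<inter> PiE UNIV (\<lambda>y. {- norm y .. norm y}))"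
    by (rule closed_Int_compactin)
  also have "\<dots> = unit_ball_functionals"
    unfolding unit_ball_functionals_def PiE_UNIV_domain Pi_def abs_le_iff
    by (auto simp: minus_le_iff)
  finally show ?thesis .
qed

lemma bounded_linear_unit_ball_functional:
  "g \<in> unit_ball_functionals \<Longrightarrow> bounded_linear g"
  unfolding unit_ball_functionals_def by (intro bounded_linear_intro[where K = 1]) auto

lemma Blinfun_unit_ball_functionals: "Blinfun ` unit_ball_functionals = cball 0 1"
proof
  show "Blinfun ` unit_ball_functionals \<subseteq> cball 0 1"
  proof clarify
    fix g :: "'b \<Rightarrow> real" assume g: "g \<in> unit_ball_functionals"
    have "norm (blinfun_apply (Blinfun g) y) \<le> 1 * norm y" for y
      using g bounded_linear_Blinfun_apply[OF bounded_linear_unit_ball_functional[OF g]]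
      unfolding unit_ball_functionals_def by simp
    then show "Blinfun g \<in> cball 0 1" using norm_blinfun_bound[of 1 "Blinfun g"] by simp
  qed
  show "cball 0 1 \<subseteq> Blinfun ` unit_ball_functionals"
  proof
    fix z :: "'b \<Rightarrow>\<^sub>L real" assume z: "z \<in> cball 0 1"
    have "\<bar>z y\<bar> \<le> norm y" for y
      using norm_blinfun[of z y] z mult_left_le_one_le[of "norm y" "norm z"]
      by (simp add: mult.commute)
    then have "blinfun_apply z \<in> unit_ball_functionals"
      unfolding unit_ball_functionals_def by (simp add: blinfun.add_right blinfun.scaleR_right)
    then show "z \<in> Blinfun ` unit_ball_functionals" by (metis blinfun_apply_inverse image_eqI)
  qed
qed

text \<open>Banach--Alaoglu, via Tychonoff: the dual unit ball is the image of the compact set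
  \<open>unit_ball_functionals\<close> of the product space under the continuous map \<open>Blinfun\<close>.\<close>
theorem compact_space_weak_star_dual_ball:
  "compact_space (weak_star_dual_ball :: ('b::real_normed_vector \<Rightarrow>\<^sub>L real) topology)"
proof -
  let ?F = "subtopology (product_topology (\<lambda>_::'b. euclideanreal) UNIV) unit_ball_functionals"
  have "continuous_map ?F (weak_star_dual_ball :: ('b \<Rightarrow>\<^sub>L real) topology) Blinfun"
    unfolding weak_star_dual_ball_def
  proof (rule continuous_map_pullback')
    show "continuous_map ?F (product_topology (\<lambda>_. euclideanreal) UNIV) (blinfun_apply \<circ> Blinfun)"
      using continuous_map_from_subtopology[OF continuous_map_id]
      by (rule continuous_map_eq)
        (simp add: bounded_linear_Blinfun_apply bounded_linear_unit_ball_functional)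
    show "topspace ?F \<subseteq> Blinfun -` cball 0 1"
      using Blinfun_unit_ball_functionals by auto
  qed
  moreover have "compact_space ?F"
    by (rule compact_space_subtopology[OF compactin_unit_ball_functionals])
  ultimately have "compactin weak_star_dual_ball (Blinfun ` topspace ?F)"
    by (metis compact_space_def image_compactin)
  then show ?thesis
    by (simp add: compact_space_def topspace_weak_star_dual_ball Blinfun_unit_ball_functionals)
qed


section \<open>The free Banach lattice norm\<close>

definition canonical_embedding :: "'a::real_normed_vector \<Rightarrow> ('a \<Rightarrow>\<^sub>L real) \<Rightarrow>\<^sub>L real" where
  "canonical_embedding x = Blinfun (\<lambda>y. blinfun_apply y x)"

lemma canonical_embedding_apply: "blinfun_apply (canonical_embedding x) y = blinfun_apply y x"
  unfolding canonical_embedding_def by (simp add: bounded_linear_Blinfun_apply)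

lemma norm_canonical_embedding_le: "norm (canonical_embedding x) \<le> norm x"
proof (rule norm_blinfun_bound)
  show "norm (blinfun_apply (canonical_embedding x) y) \<le> norm x * norm y" for y
    using norm_blinfun[of y x] by (simp add: canonical_embedding_apply mult.commute)
qed simp

lemma sum_list_const_mult: "(\<Sum>x\<leftarrow>xs. c * f x) = c * (\<Sum>x\<leftarrow>xs. f x :: 'b::semiring_0)"
  by (induction xs) (simp_all add: distrib_left)

lemma sum_list_divide: "(\<Sum>x\<leftarrow>xs. f x / c) = (\<Sum>x\<leftarrow>xs. f x) / (c :: 'b::field)"
  by (induction xs) (simp_all add: add_divide_distrib)

lemma continuous_map_sum_list:
  "(\<And>y. y \<in> set ys \<Longrightarrow> continuous_map X euclideanreal (F y)) \<Longrightarrow>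
    continuous_map X euclideanreal (\<lambda>z. \<Sum>y\<leftarrow>ys. F y z)"
  by (induction ys) (simp_all add: continuous_map_add)

definition weak_l1_norm :: "('a::real_normed_vector \<Rightarrow>\<^sub>L real) list \<Rightarrow> real" where
  "weak_l1_norm ys = Sup ((\<lambda>x. \<Sum>y\<leftarrow>ys. \<bar>blinfun_apply y x\<bar>) ` cball 0 1)"

lemma sum_abs_apply_le_weak_l1_norm:
  fixes ys :: "('a::real_normed_vector \<Rightarrow>\<^sub>L real) list"
  assumes "norm x \<le> 1"
  shows "(\<Sum>y\<leftarrow>ys. \<bar>blinfun_apply y x\<bar>) \<le> weak_l1_norm ys"
proof -
  have "(\<Sum>y\<leftarrow>ys. \<bar>blinfun_apply y x\<bar>) \<le> (\<Sum>y\<leftarrow>ys. norm y)" if "norm x \<le> 1" for x :: 'a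
  proof (rule sum_list_mono)
    fix y :: "'a \<Rightarrow>\<^sub>L real"
    show "\<bar>blinfun_apply y x\<bar> \<le> norm y"
      using norm_blinfun[of y x] mult_left_le_one_le[of "norm y" "norm x"] that
      by (simp add: mult.commute)
  qed
  then have "bdd_above ((\<lambda>x. \<Sum>y\<leftarrow>ys. \<bar>blinfun_apply y x\<bar>) ` cball 0 1)"
    by (intro bdd_aboveI[of _ "\<Sum>y\<leftarrow>ys. norm y"]) auto
  then show ?thesis unfolding weak_l1_norm_def using assms by (intro cSUP_upper) auto
qed

lemma weak_l1_norm_nonneg: "0 \<le> weak_l1_norm ys"
proof -
  have "(\<Sum>y\<leftarrow>ys. \<bar>blinfun_apply y 0\<bar>) = 0" by (induction ys) simp_all
  then show ?thesis using sum_abs_apply_le_weak_l1_norm[of 0 ys] by simp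
qed

lemma fbl_admissible_scaleR:
  fixes ys :: "('a::real_normed_vector \<Rightarrow>\<^sub>L real) list"
  assumes "weak_l1_norm ys \<le> t" "t > 0"
  shows "fbl_admissible (map (\<lambda>y. (1 / t) *\<^sub>R y) ys)"
  unfolding fbl_admissible_def
proof (intro allI impI)
  fix x :: 'a assume "norm x \<le> 1"
  then have "(\<Sum>y\<leftarrow>ys. \<bar>blinfun_apply y x\<bar>) \<le> t"
    using sum_abs_apply_le_weak_l1_norm assms(1) by (blast intro: order_trans)
  then show "(\<Sum>y\<leftarrow>map (\<lambda>y. (1 / t) *\<^sub>R y) ys. \<bar>y x\<bar>) \<le> 1"
    using assms(2) by (simp add: o_def blinfun.scaleR_left abs_mult sum_list_divide)
qed

lemma H0_scaleR: "f \<in> H0 \<Longrightarrow> c > 0 \<Longrightarrow> f (c *\<^sub>R y) = c * f y"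
  unfolding H0_def pos_homogeneous_def by blast

lemma sum_abs_le_fbl_norm:
  assumes "f \<in> H0" "fbl_admissible ys"
  shows "(\<Sum>y\<leftarrow>ys. \<bar>f y\<bar>) \<le> fbl_norm f"
  unfolding fbl_norm_def using assms
  by (intro cSup_upper) (auto simp: fbl_sums_def H0_def)

lemma fbl_norm_nonneg: "f \<in> H0 \<Longrightarrow> 0 \<le> fbl_norm f"
  using sum_abs_le_fbl_norm[of f "[]"] by (simp add: fbl_admissible_def)

text \<open>Scaling \<open>ys\<close> by \<open>1 / t\<close> for \<open>t\<close> slightly above \<open>weak_l1_norm ys\<close> makes it admissible;
  the detour through \<open>t\<close> avoids dividing by \<open>weak_l1_norm ys\<close>, which may vanish.\<close>
lemma sum_abs_le_fbl_norm_mult_weak_l1_norm: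
  assumes f: "f \<in> H0"
  shows "(\<Sum>y\<leftarrow>ys. \<bar>f y\<bar>) \<le> fbl_norm f * weak_l1_norm ys"
proof (rule field_le_epsilon)
  fix e :: real assume e: "e > 0"
  define N where "N = fbl_norm f"
  define t where "t = weak_l1_norm ys + e / (N + 1)"
  have N: "0 \<le> N" unfolding N_def using fbl_norm_nonneg[OF f] .
  have t: "t > 0" "weak_l1_norm ys \<le> t"
    unfolding t_def using weak_l1_norm_nonneg[of ys] e N by (auto intro: add_nonneg_pos)
  have "(1 / t) * (\<Sum>y\<leftarrow>ys. \<bar>f y\<bar>) = (\<Sum>y\<leftarrow>map (\<lambda>y. (1 / t) *\<^sub>R y) ys. \<bar>f y\<bar>)"
    using t(1) by (simp add: o_def H0_scaleR[OF f] abs_mult sum_list_divide)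
  also have "\<dots> \<le> N"
    unfolding N_def using fbl_admissible_scaleR[OF t(2,1)] by (rule sum_abs_le_fbl_norm[OF f])
  finally have "(\<Sum>y\<leftarrow>ys. \<bar>f y\<bar>) \<le> N * t" using t(1) by (simp add: field_simps)
  also have "N * t = N * weak_l1_norm ys + N * (e / (N + 1))" by (simp add: t_def algebra_simps)
  also have "N * (e / (N + 1)) \<le> e" using N e by (simp add: field_simps)
  finally show "(\<Sum>y\<leftarrow>ys. \<bar>f y\<bar>) \<le> fbl_norm f * weak_l1_norm ys + e" by (simp add: N_def)
qed

definition fbl_slack ::
    "(('a::real_normed_vector \<Rightarrow>\<^sub>L real) \<Rightarrow> real) \<Rightarrow> ('a \<Rightarrow>\<^sub>L real) list \<Rightarrow>
      (('a \<Rightarrow>\<^sub>L real) \<Rightarrow>\<^sub>L real) \<Rightarrow> real" where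
  "fbl_slack f ys z = fbl_norm f * (\<Sum>y\<leftarrow>ys. \<bar>blinfun_apply z y\<bar>) - (\<Sum>y\<leftarrow>ys. f y)"

lemma fbl_slack_Nil: "fbl_slack f [] = (\<lambda>_. 0)"
  unfolding fbl_slack_def by simp

lemma fbl_slack_append: "fbl_slack f (ys @ ys') = (\<lambda>z. fbl_slack f ys z + fbl_slack f ys' z)"
  unfolding fbl_slack_def by (simp add: algebra_simps)

lemma fbl_slack_scaleR:
  assumes "f \<in> H0" "c > 0"
  shows "fbl_slack f (map (\<lambda>y. c *\<^sub>R y) ys) = (\<lambda>z. c * fbl_slack f ys z)"
  unfolding fbl_slack_def using assms
  by (simp add: o_def H0_scaleR blinfun.scaleR_right abs_mult sum_list_const_mult algebra_simps)

lemma continuous_map_fbl_slack: "continuous_map weak_star_dual_ball euclideanreal (fbl_slack f ys)"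
  unfolding fbl_slack_def[abs_def]
  by (intro continuous_intros continuous_map_sum_list continuous_map_weak_star_dual_ball_apply)

lemma Sup_fbl_slack_nonneg:
  assumes f: "f \<in> H0_pos"
  shows "0 \<le> Sup (fbl_slack f ys ` cball 0 1)"
proof -
  let ?S = "Sup (fbl_slack f ys ` cball 0 1)"
  have f0: "f \<in> H0" and nonneg: "\<And>y. 0 \<le> f y" using f by (auto simp: H0_pos_def)
  have "bdd_above (fbl_slack f ys ` cball 0 1)"
    using bdd_above_continuous_map_image[OF compact_space_weak_star_dual_ball
        continuous_map_fbl_slack]
    by (simp add: topspace_weak_star_dual_ball)
  then have at_embedding: "fbl_norm f * (\<Sum>y\<leftarrow>ys. \<bar>blinfun_apply y x\<bar>) \<le> ?S + (\<Sum>y\<leftarrow>ys. f y)"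
    if "norm x \<le> 1" for x
    using cSUP_upper[of "canonical_embedding x" "cball 0 1" "fbl_slack f ys"]
      norm_canonical_embedding_le[of x] that
    by (simp add: fbl_slack_def canonical_embedding_apply)
  have "fbl_norm f * weak_l1_norm ys \<le> ?S + (\<Sum>y\<leftarrow>ys. f y)"
  proof (cases "fbl_norm f = 0")
    case True
    then show ?thesis using at_embedding[of 0] by simp
  next
    case False
    then have N: "fbl_norm f > 0" using fbl_norm_nonneg[OF f0] by simp
    have "weak_l1_norm ys \<le> (?S + (\<Sum>y\<leftarrow>ys. f y)) / fbl_norm f"
      unfolding weak_l1_norm_def
      using at_embedding N by (intro cSUP_least) (auto simp: field_simps)
    then show ?thesis using N by (simp add: field_simps)
  qed
  moreover have "(\<Sum>y\<leftarrow>ys. f y) \<le> fbl_norm f * weak_l1_norm ys"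
    using sum_abs_le_fbl_norm_mult_weak_l1_norm[OF f0, of ys] nonneg by simp
  ultimately show ?thesis by linarith
qed

lemma sup_nonneg_cone_fbl_slack:
  assumes f: "f \<in> H0_pos"
  shows "sup_nonneg_cone weak_star_dual_ball (range (fbl_slack f))"
proof
  have f0: "f \<in> H0" using f by (simp add: H0_pos_def)
  show "compact_space weak_star_dual_ball" by (rule compact_space_weak_star_dual_ball)
  show "Hausdorff_space weak_star_dual_ball" by (rule Hausdorff_space_weak_star_dual_ball)
  show "topspace weak_star_dual_ball \<noteq> {}" by (simp add: topspace_weak_star_dual_ball)
  show "continuous_map weak_star_dual_ball euclideanreal g" if "g \<in> range (fbl_slack f)" for g
    using that continuous_map_fbl_slack by blast
  show "0 \<le> Sup (g ` topspace weak_star_dual_ball)" if "g \<in> range (fbl_slack f)" for g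
    using that Sup_fbl_slack_nonneg[OF f] by (auto simp: topspace_weak_star_dual_ball)
  have "(\<lambda>_. 0) = fbl_slack f []" by (simp add: fbl_slack_Nil)
  then show "(\<lambda>_. 0) \<in> range (fbl_slack f)" by simp
  show "(\<lambda>x. g x + g' x) \<in> range (fbl_slack f)"
    if g: "g \<in> range (fbl_slack f)" and g': "g' \<in> range (fbl_slack f)" for g g'
  proof -
    obtain ys ys' where "g = fbl_slack f ys" "g' = fbl_slack f ys'" using g g' by blast
    then have "(\<lambda>x. g x + g' x) = fbl_slack f (ys @ ys')" by (simp add: fbl_slack_append)
    then show ?thesis by simp
  qed
  show "(\<lambda>x. c * g x) \<in> range (fbl_slack f)" if g: "g \<in> range (fbl_slack f)" and c: "c > 0" for c g
  proof -
    obtain ys where "g = fbl_slack f ys" using g by blast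
    then have "(\<lambda>x. c * g x) = fbl_slack f (map (\<lambda>y. c *\<^sub>R y) ys)"
      using fbl_slack_scaleR[OF f0 c] by simp
    then show ?thesis by simp
  qed
qed

theorem proposition2p12:
  fixes f :: "('a::banach \<Rightarrow>\<^sub>L real) \<Rightarrow> real"
  assumes "f \<in> H0_pos"
  shows "\<exists>\<mu> :: (('a \<Rightarrow>\<^sub>L real) \<Rightarrow>\<^sub>L real) measure.
           prob_space \<mu> \<and>
           sets \<mu> = sets (borel_of weak_star_bidual_ball) \<and>
           space \<mu> = topspace weak_star_bidual_ball \<and>
           regular_measure_on weak_star_bidual_ball \<mu> \<and>
           (\<forall>xs :: 'a \<Rightarrow>\<^sub>L real. f xs \<le> fbl_norm f * (\<integral>z. \<bar>z xs\<bar> \<partial>\<mu>))"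
proof -
  interpret sup_nonneg_cone weak_star_dual_ball "range (fbl_slack f)"
    using sup_nonneg_cone_fbl_slack[OF assms] .
  obtain \<mu> where \<mu>: "prob_space \<mu>" "sets \<mu> = sets (borel_of weak_star_dual_ball)"
      "space \<mu> = topspace weak_star_dual_ball" "regular_measure_on weak_star_dual_ball \<mu>"
    and slack_nonneg: "\<And>g. g \<in> range (fbl_slack f) \<Longrightarrow> 0 \<le> (\<integral>z. g z \<partial>\<mu>)"
    using exists_measure_integral_nonneg by blast
  interpret prob_space \<mu> by (rule \<mu>(1))
  have "f y \<le> fbl_norm f * (\<integral>z. \<bar>z y\<bar> \<partial>\<mu>)" for y
  proof -
    have "integrable \<mu> (\<lambda>z. \<bar>blinfun_apply z y\<bar>)"
      using finite_measure \<mu>(2,3) compact_space_weak_star_dual_ball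
      by (rule integrable_continuous_map)
        (intro continuous_intros continuous_map_weak_star_dual_ball_apply)
    then have "(\<integral>z. fbl_slack f [y] z \<partial>\<mu>) = fbl_norm f * (\<integral>z. \<bar>z y\<bar> \<partial>\<mu>) - f y"
      by (simp add: fbl_slack_def prob_space)
    then show ?thesis using slack_nonneg[of "fbl_slack f [y]"] by simp
  qed
  then show ?thesis unfolding weak_star_bidual_ball_eq using \<mu> by blast
qed

end
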